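(* Let $n \ge 4$ and $1 \le a \le b \le n$ be integers, and consider the problem $\mathrm{IK}^n(x_a\cdots x_b)$ of minimizing $x_a x_{a+1}\cdots x_b$ over $\mathcal{X}^n$. Let $l \in \{1,\ldots,n\}$. Then: (a) if $a = b$, then $\bar x(b)$ is a minimizer of $x_b$ over $\mathcal{X}^n$; (b) if $b < n-1$ and $\bar x(l)$ is a minimizer of $x_a\cdots x_b$, then $a \le l \le 2 + \log_2(\log_2 n + \log_2 e)$ or $l = b$; (c) if $a=1$ and $b=n$, then $\bar x(n) = \big(\frac1{s_1},\ldots,\frac1{s_{n-1}},\frac1{s_n-1}\big)$ is the unique minimizer of $x_1\cdots x_n$ over $\mathcal{X}^n$; (d) if $b = n$, then $\bar x(l)$ is a minimizer of $x_a\cdots x_n$ if and only if $l = n$; (e) if $b = n-1$, then $\bar x(l)$ is a minimizer of $x_a\cdots x_{n-1}$ if and only if either $l = n-1$, or $n = 4$, $a\in\{1,2\}$ and $l = 2$.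
   Context: The Sylvester sequence: $s_1 = 2$, $s_i = \prod_{j=1}^{i-1} s_j + 1$ for $i\ge2$. $\mathcal{X}^n$ is the set of $x\in\mathbb{R}^n$ with $x_1+\cdots+x_n = 1$, $1 \ge x_1 \ge \cdots \ge x_n \ge 0$, and $x_1\cdots x_j \le x_{j+1}+\cdots+x_n$ for all $j\in\{1,\ldots,n-1\}$. For $l\in\{1,\ldots,n\}$, $\bar x(l) := \big(\frac{1}{s_1},\ldots,\frac{1}{s_{l-1}}, \frac{1}{(n-l+1)(s_l-1)},\ldots,\frac{1}{(n-l+1)(s_l-1)}\big)\in\mathbb{R}^n$ (last value repeated $n-l+1$ times); these lie in $\mathcal{X}^n$. *)

theory Defs
  imports Complex_Main
begin

text \<open>Sylvester sequence: s 1 = 2, s i = (prod_{j=1}^{i-1} s j) + 1 for i >= 2.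
  The value at index 0 is an unused dummy (0).\<close>
fun sylv :: "nat \<Rightarrow> nat" where
  "sylv 0 = 0"
| "sylv (Suc i) = (if i = 0 then 2 else (\<Prod>j\<in>{1..i}. sylv j) + 1)"

text \<open>Points of R^n are represented as functions nat => real, with coordinates
  x 1, ..., x n and required to vanish outside {1..n}.\<close>
definition Xset :: "nat \<Rightarrow> (nat \<Rightarrow> real) set" where
  "Xset n = {x. (\<forall>i. i \<notin> {1..n} \<longrightarrow> x i = 0)
             \<and> (\<Sum>i=1..n. x i) = 1
             \<and> x 1 \<le> 1
             \<and> (\<forall>i. 1 \<le> i \<and> i < n \<longrightarrow> x (i+1) \<le> x i)
             \<and> x n \<ge> 0
             \<and> (\<forall>j. 1 \<le> j \<and> j \<le> n - 1 \<longrightarrow> (\<Prod>i=1..j. x i) \<le> (\<Sum>i=j+1..n. x i))}"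

definition xbar :: "nat \<Rightarrow> nat \<Rightarrow> (nat \<Rightarrow> real)" where
  "xbar n l = (\<lambda>i. if 1 \<le> i \<and> i < l then 1 / real (sylv i)
                   else if l \<le> i \<and> i \<le> n then 1 / (real (n - l + 1) * (real (sylv l) - 1))
                   else 0)"

definition obj :: "nat \<Rightarrow> nat \<Rightarrow> (nat \<Rightarrow> real) \<Rightarrow> real" where
  "obj a b x = (\<Prod>i=a..b. x i)"

definition is_minimizer :: "nat \<Rightarrow> nat \<Rightarrow> nat \<Rightarrow> (nat \<Rightarrow> real) \<Rightarrow> bool" where
  "is_minimizer n a b x \<longleftrightarrow> x \<in> Xset n \<and> (\<forall>y\<in>Xset n. obj a b x \<le> obj a b y)"

end

theory Submission
  imports Defs
begin

text \<open>Write \<open>A j = 1 / (sylv 1 \<cdots> sylv j) = 1 - (\<Sum>i\<le>j. 1 / sylv i)\<close> (\<open>sylv_rem j\<close> below), so that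
  \<open>A (j + 1) = A j\<^sup>2 / (1 + A j)\<close>, and \<open>xbar n l\<close> consists of \<open>1 / sylv 1, \<dots>, 1 / sylv (l - 1)\<close>
  followed by \<open>A (l - 1)\<close> spread evenly.
  For \<open>y \<in> Xset n\<close> the product constraints give, through the Tomic--Weyl inequality, the tail
  bound \<open>(\<Sum>i>m. y i) \<ge> A m\<close>, which \<open>xbar n l\<close> attains for \<open>m < l\<close>.
  Abel summation against the increasing weights \<open>1 / y i\<close>, together with \<open>ln t \<le> t - 1\<close>, turns the
  tail bound into minimality of \<open>xbar n n\<close> for every product \<open>y a \<cdots> y n\<close>, uniquely for the full product;
  this is (c) and half of (d). For \<open>b = n - 1\<close>, split \<open>y\<close> after the last index \<open>k\<close> with
  \<open>y k \<ge> (\<Sum>i>k. y i)\<close>: collapsing the tail into one coordinate reduces the head to the case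
  \<open>b = n\<close>, and the remaining block, in which every term is smaller than the sum of its successors,
  has a product bounded below by a power of its sum. Together these give
  \<open>y a \<cdots> y (n - 1) \<ge> A (n - 2)\<^sup>2 / (2 A (a - 1))\<close>. The remaining claims compare the explicit values of
  the objective at the points \<open>xbar n l\<close>; for (b), once \<open>sylv l > e n\<close>, which the doubly exponential
  growth of \<open>sylv\<close> guarantees beyond the stated bound, \<open>xbar n (l + 1)\<close> beats \<open>xbar n l\<close>.\<close>

definition sylv_prod :: "nat \<Rightarrow> nat" where
  "sylv_prod j = (\<Prod>i=1..j. sylv i)"

definition sylv_rem :: "nat \<Rightarrow> real" where
  "sylv_rem j = 1 / real (sylv_prod j)"

lemma sylv_prod_0 [simp]: "sylv_prod 0 = 1"
  by (simp add: sylv_prod_def)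

lemma sylv_Suc: "sylv (Suc j) = sylv_prod j + 1"
  by (cases j) (simp_all only: sylv.simps sylv_prod_def, simp_all)

declare sylv.simps(2) [simp del]

lemma sylv_prod_Suc: "sylv_prod (Suc j) = sylv_prod j * sylv (Suc j)"
  by (simp add: sylv_prod_def prod.nat_ivl_Suc')

lemma sylv_prod_Suc': "sylv_prod (Suc j) = sylv_prod j * (sylv_prod j + 1)"
  by (simp add: sylv_prod_Suc sylv_Suc)

lemma sylv_prod_ge_1: "1 \<le> sylv_prod j"
  by (induction j) (auto simp: sylv_prod_Suc')

lemma sylv_prod_ge_2: "1 \<le> j \<Longrightarrow> 2 \<le> sylv_prod j"
  using sylv_prod_ge_1[of "j - 1"] mult_mono[of 1 "sylv_prod (j - 1)" 2 "sylv_prod (j - 1) + 1"]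
  by (cases j) (auto simp: sylv_prod_Suc')

lemma sylv_ge_2: "1 \<le> i \<Longrightarrow> 2 \<le> sylv i"
  using sylv_prod_ge_1 by (cases i) (auto simp: sylv_Suc)

lemma sylv_mono:
  assumes "1 \<le> i" "i \<le> j" shows "sylv i \<le> sylv j"
  using assms(2,1)
proof (induction j rule: dec_induct)
  case (step k)
  then show ?case
    using sylv_prod_ge_1[of "k - 1"] by (cases k) (auto simp: sylv_Suc sylv_prod_Suc')
qed simp

lemma sylv_le_sylv_prod: "1 \<le> i \<Longrightarrow> sylv i \<le> sylv_prod i"
  using sylv_prod_ge_1[of "i - 1"] by (cases i) (auto simp: sylv_prod_Suc)

lemma sylv_prod_mult_le: "sylv_prod j * sylv_prod i \<le> sylv_prod (j + i)"
proof (induction i)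
  case (Suc i)
  have "sylv_prod j * sylv_prod (Suc i) = (sylv_prod j * sylv_prod i) * sylv (Suc i)"
    by (simp add: sylv_prod_Suc)
  also have "\<dots> \<le> sylv_prod (j + i) * sylv (Suc (j + i))"
    using Suc sylv_mono[of "Suc i" "Suc (j + i)"] by (intro mult_mono) auto
  finally show ?case
    by (simp add: sylv_prod_Suc)
qed simp

lemma sylv_1: "sylv 1 = 2"
  using sylv_Suc[of 0] by simp

lemma sylv_2: "sylv 2 = 3"
  using sylv_Suc[of 1] sylv_prod_Suc[of 0] sylv_1 by (simp add: numeral_2_eq_2)

lemma sylv_rem_0 [simp]: "sylv_rem 0 = 1"
  by (simp add: sylv_rem_def)

lemma sylv_rem_pos: "0 < sylv_rem j"
  using sylv_prod_ge_1[of j] by (simp add: sylv_rem_def)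

lemma sylv_rem_le_1: "sylv_rem j \<le> 1"
  using sylv_prod_ge_1[of j] by (simp add: sylv_rem_def)

lemma sylv_rem_le_half: "1 \<le> j \<Longrightarrow> sylv_rem j \<le> 1/2"
  using sylv_prod_ge_2[of j] by (simp add: sylv_rem_def field_simps)

lemma sylv_rem_Suc: "sylv_rem (Suc j) = sylv_rem j ^ 2 / (1 + sylv_rem j)"
  using sylv_prod_ge_1[of j]
  by (simp add: sylv_rem_def sylv_prod_Suc' field_simps power2_eq_square)

lemma sylv_rem_Suc_div: "sylv_rem (Suc j) = sylv_rem j / real (sylv (Suc j))"
  using sylv_ge_2[of "Suc j"] by (simp add: sylv_rem_def sylv_prod_Suc)

lemma sylv_rem_pred: "1 \<le> l \<Longrightarrow> sylv_rem (l - 1) = 1 / (real (sylv l) - 1)"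
  by (cases l) (auto simp: sylv_rem_def sylv_Suc)

lemma inverse_sylv_Suc: "1 / real (sylv (Suc j)) = sylv_rem j - sylv_rem (Suc j)"
proof -
  have "0 < real (sylv_prod j)" "0 < real (sylv_prod j) + real (sylv_prod j) * real (sylv_prod j)"
    using sylv_prod_ge_1[of j] by (auto intro!: add_pos_pos)
  then show ?thesis
    by (simp add: sylv_rem_def sylv_prod_Suc' sylv_Suc field_simps)
qed

lemma sylv_rem_Suc_le_sq: "sylv_rem (Suc j) \<le> sylv_rem j ^ 2"
  using sylv_rem_pos[of j] by (simp add: sylv_rem_Suc divide_le_eq)

lemma decseq_sylv_rem: "decseq sylv_rem"
proof (rule decseq_SucI)
  fix j
  have "sylv_rem j ^ 2 \<le> sylv_rem j"
    using sylv_rem_pos[of j] sylv_rem_le_1[of j] by (simp add: power2_eq_square)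
  then show "sylv_rem (Suc j) \<le> sylv_rem j"
    using sylv_rem_Suc_le_sq[of j] by linarith
qed

lemma sylv_rem_add_le: "sylv_rem (j + i) \<le> sylv_rem j * sylv_rem i"
proof -
  have "real (sylv_prod j) * real (sylv_prod i) \<le> real (sylv_prod (j + i))"
    using sylv_prod_mult_le[of j i] by (simp flip: of_nat_mult)
  then show ?thesis
    using sylv_prod_ge_1[of i] sylv_prod_ge_1[of j] sylv_prod_ge_1[of "j + i"]
    by (simp add: sylv_rem_def field_simps)
qed

lemma sylv_rem_le_inverse_sylv: "1 \<le> i \<Longrightarrow> sylv_rem i \<le> 1 / real (sylv i)"
  using sylv_le_sylv_prod[of i] sylv_ge_2[of i] by (simp add: sylv_rem_def frac_le)

lemma sylv_rem_1: "sylv_rem 1 = 1/2"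
  using sylv_rem_Suc[of 0] by simp

lemma sylv_rem_2: "sylv_rem 2 = 1/6"
  using sylv_rem_Suc[of 1] unfolding Suc_1 sylv_rem_1 by (simp add: power2_eq_square)

lemma sylv_rem_3: "sylv_rem 3 = 1/42"
  using sylv_rem_Suc[of 2] by (simp add: sylv_rem_2 power2_eq_square)

lemma sum_inverse_sylv: "j \<le> k \<Longrightarrow> (\<Sum>i=Suc j..k. 1 / real (sylv i)) = sylv_rem j - sylv_rem k"
  by (induction k rule: dec_induct) (simp_all add: inverse_sylv_Suc)

lemma prod_inverse_sylv: "j \<le> k \<Longrightarrow> (\<Prod>i=Suc j..k. 1 / real (sylv i)) = sylv_rem k / sylv_rem j"
  by (induction k rule: dec_induct) (simp_all add: sylv_rem_pos less_imp_neq [symmetric] sylv_rem_Suc_div)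

lemma sylv_rem_Suc_sq_eq:
  "sylv_rem (Suc j)^2 = sylv_rem j ^ 3 * (sylv_rem j / (1 + sylv_rem j)^2)"
  by (simp add: sylv_rem_Suc power_divide power2_eq_square power3_eq_cube)

lemma sylv_rem_Suc_sq_le_two_ninths:
  assumes "1 \<le> j"
  shows "sylv_rem (Suc j)^2 \<le> 2/9 * sylv_rem j ^ 3"
proof -
  define a where "a = sylv_rem j"
  have a: "0 < a" "a \<le> 1/2"
    using sylv_rem_pos sylv_rem_le_half[OF assms] by (auto simp: a_def)
  have "0 \<le> (1 - 2 * a) * (2 - a)"
    using a by (intro mult_nonneg_nonneg) auto
  then have "a / (1 + a)^2 \<le> 2/9"
    using a by (simp add: divide_le_eq power2_eq_square algebra_simps)
  have "sylv_rem (Suc j)^2 = a ^ 3 * (a / (1 + a)^2)"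
    unfolding a_def by (rule sylv_rem_Suc_sq_eq)
  also have "\<dots> \<le> a ^ 3 * (2/9)"
    using \<open>a / (1 + a)^2 \<le> 2/9\<close> a by (intro mult_left_mono) auto
  finally show ?thesis
    by (simp add: a_def)
qed

lemma sylv_rem_Suc_sq_lt_two_ninths:
  assumes "2 \<le> j"
  shows "sylv_rem (Suc j)^2 < 2/9 * sylv_rem j ^ 3"
proof -
  define a where "a = sylv_rem j"
  have a: "0 < a" "a \<le> 1/6"
    using sylv_rem_pos decseqD[OF decseq_sylv_rem assms] sylv_rem_2 by (auto simp: a_def)
  have "0 < (1 - 2 * a) * (2 - a)"
    using a by (intro mult_pos_pos) auto
  then have "a / (1 + a)^2 < 2/9"
    using a by (simp add: divide_less_eq power2_eq_square algebra_simps)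
  have "sylv_rem (Suc j)^2 = a ^ 3 * (a / (1 + a)^2)"
    unfolding a_def by (rule sylv_rem_Suc_sq_eq)
  also have "\<dots> < a ^ 3 * (2/9)"
    using \<open>a / (1 + a)^2 < 2/9\<close> a by (intro mult_strict_left_mono) auto
  finally show ?thesis
    by (simp add: a_def)
qed

lemma sylv_rem_Suc_sq_lt_quarter:
  assumes "1 \<le> j"
  shows "sylv_rem (Suc j)^2 < 1/4 * sylv_rem j ^ 3"
proof -
  define a where "a = sylv_rem j"
  have a: "0 < a" "a \<le> 1/2"
    using sylv_rem_pos sylv_rem_le_half[OF assms] by (auto simp: a_def)
  have "0 < (1 - a)^2"
    using a by simp
  then have "a / (1 + a)^2 < 1/4"
    using a by (simp add: divide_less_eq power2_eq_square algebra_simps)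
  have "sylv_rem (Suc j)^2 = a ^ 3 * (a / (1 + a)^2)"
    unfolding a_def by (rule sylv_rem_Suc_sq_eq)
  also have "\<dots> < a ^ 3 * (1/4)"
    using \<open>a / (1 + a)^2 < 1/4\<close> a by (intro mult_strict_left_mono) auto
  finally show ?thesis
    by (simp add: a_def)
qed

lemma sylv_rem_Suc_Suc_le: "sylv_rem (Suc (Suc j)) \<le> sylv_rem j ^ 2 / 6"
proof (cases j)
  case 0
  then show ?thesis
    using sylv_rem_2 by (simp add: numeral_2_eq_2)
next
  case (Suc i)
  define a where "a = sylv_rem j"
  have a: "0 < a" "a \<le> 1/2"
    using sylv_rem_pos sylv_rem_le_half[of j] Suc by (auto simp: a_def)
  have "a * a \<le> a * (1/2)"
    using a by (intro mult_left_mono) auto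
  moreover have "a^2 = a * a" "(1 + a)^2 = 1 + 2 * a + a * a"
    by (simp_all add: power2_eq_square algebra_simps)
  ultimately have "6 * a^2 \<le> (1 + a)^2"
    using a by linarith
  have "(a^2 / (1 + a))^2 = a^2 * a^2 / (1 + a)^2"
    by (simp add: power_divide power2_eq_square)
  also have "\<dots> \<le> a^2 * a^2 / (6 * a^2)"
    using \<open>6 * a^2 \<le> (1 + a)^2\<close> a by (intro frac_le) auto
  also have "\<dots> = a^2 / 6"
    using a by (simp add: power2_eq_square)
  finally show ?thesis
    using sylv_rem_Suc_le_sq[of "Suc j"] sylv_rem_Suc[of j] by (simp add: a_def)
qed

lemma Xset_zero: "y \<in> Xset n \<Longrightarrow> i < 1 \<or> n < i \<Longrightarrow> y i = 0"
  unfolding Xset_def by auto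

lemma Xset_sum: "y \<in> Xset n \<Longrightarrow> (\<Sum>i=1..n. y i) = 1"
  unfolding Xset_def by auto

lemma Xset_prod_le_sum: "y \<in> Xset n \<Longrightarrow> 1 \<le> j \<Longrightarrow> j < n \<Longrightarrow> (\<Prod>i=1..j. y i) \<le> (\<Sum>i=Suc j..n. y i)"
  unfolding Xset_def by auto

lemma Xset_Suc_le: "y \<in> Xset n \<Longrightarrow> 1 \<le> i \<Longrightarrow> i < n \<Longrightarrow> y (Suc i) \<le> y i"
  unfolding Xset_def by auto

lemma Xset_antimono:
  assumes "y \<in> Xset n" "1 \<le> i" "i \<le> j" "j \<le> n"
  shows "y j \<le> y i"
  using assms(3,4)
proof (induction j rule: dec_induct)
  case (step k)
  then show ?case
    using Xset_Suc_le[OF assms(1), of k] assms(2) by simp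
qed simp

lemma Xset_nonneg:
  assumes y: "y \<in> Xset n" and i: "1 \<le> i" "i \<le> n"
  shows "0 \<le> y i"
  using Xset_antimono[OF y i order_refl] y unfolding Xset_def by auto

lemma XsetI:
  assumes "\<And>i. i < 1 \<or> n < i \<Longrightarrow> v i = 0" "(\<Sum>i=1..n. v i) = 1" "v 1 \<le> 1"
    and "\<And>i. 1 \<le> i \<Longrightarrow> i < n \<Longrightarrow> v (Suc i) \<le> v i" "0 \<le> v n"
    and "\<And>j. 1 \<le> j \<Longrightarrow> j < n \<Longrightarrow> (\<Prod>i=1..j. v i) \<le> (\<Sum>i=Suc j..n. v i)"
  shows "v \<in> Xset n"
  using assms unfolding Xset_def by (auto simp: not_le)

lemma obtain_last:
  fixes P :: "nat \<Rightarrow> bool"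
  assumes "P 0"
  obtains k where "k \<le> N" "P k" "\<And>j. k < j \<Longrightarrow> j \<le> N \<Longrightarrow> \<not> P j"
proof -
  have "\<exists>k\<le>N. P k \<and> (\<forall>j. k < j \<and> j \<le> N \<longrightarrow> \<not> P j)"
  proof (induction N)
    case (Suc N)
    then show ?case
      by (cases "P (Suc N)") (auto simp: le_Suc_eq)
  qed (use assms in auto)
  then show ?thesis
    using that by blast
qed

text \<open>At the first zero coordinate \<open>y j\<close> the whole tail vanishes, contradicting the constraint at \<open>j - 1\<close>.\<close>
lemma Xset_pos:
  assumes y: "y \<in> Xset n" and i: "1 \<le> i" "i \<le> n"
  shows "0 < y i"
proof (rule ccontr)
  assume "\<not> 0 < y i"
  then have "y i = 0"
    using Xset_nonneg[OF y i] by simp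
  define j where "j = (LEAST j. 1 \<le> j \<and> y j = 0)"
  have j: "1 \<le> j" "y j = 0" "j \<le> i"
    using LeastI[of "\<lambda>j. 1 \<le> j \<and> y j = 0" i] Least_le[of "\<lambda>j. 1 \<le> j \<and> y j = 0" i] \<open>y i = 0\<close> i
    unfolding j_def by auto
  have head_pos: "0 < y k" if "1 \<le> k" "k < j" for k
    using not_less_Least[of k "\<lambda>j. 1 \<le> j \<and> y j = 0"] Xset_nonneg[OF y, of k] that j i
    unfolding j_def by fastforce
  have "y k = 0" if "j \<le> k" "k \<le> n" for k
    using Xset_antimono[OF y, of j k] Xset_nonneg[OF y, of k] j that by auto
  then have tail: "(\<Sum>k=j..n. y k) = 0"
    by simp
  show False
  proof (cases "j = 1")
    case True
    then show False
      using tail Xset_sum[OF y] by simp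
  next
    case False
    have "0 < (\<Prod>k=1..j-1. y k)"
      using head_pos by (intro prod_pos) auto
    also have "\<dots> \<le> (\<Sum>k=Suc (j-1)..n. y k)"
      using Xset_prod_le_sum[OF y, of "j - 1"] False j i by simp
    finally show False
      using tail False j by simp
  qed
qed

lemma sum_mult_nonpos_of_partial_sums:
  fixes w d :: "nat \<Rightarrow> real"
  assumes "p \<le> q" "\<And>i. p \<le> i \<Longrightarrow> i < q \<Longrightarrow> w (Suc i) \<le> w i" "\<And>i. p \<le> i \<Longrightarrow> i \<le> q \<Longrightarrow> 0 \<le> w i"
    and "\<And>t. p \<le> t \<Longrightarrow> t \<le> q \<Longrightarrow> (\<Sum>i=p..t. d i) \<le> 0"
  shows "(\<Sum>i=p..q. w i * d i) \<le> 0"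
proof -
  have "(\<Sum>i=p..t. w i * d i) \<le> w t * (\<Sum>i=p..t. d i)" if "p \<le> t" "t \<le> q" for t
    using that
  proof (induction t rule: dec_induct)
    case (step k)
    have "(w k - w (Suc k)) * (\<Sum>i=p..k. d i) \<le> 0"
      using assms(2)[of k] assms(4)[of k] step by (intro mult_nonneg_nonpos) auto
    then show ?case
      using step by (simp add: algebra_simps)
  qed simp
  also have "w q * (\<Sum>i=p..q. d i) \<le> 0"
    using assms(3,4)[of q] assms(1) by (intro mult_nonneg_nonpos) auto
  finally show ?thesis
    using assms(1) by simp
qed

lemma sum_mult_nonneg_of_tail_sums:
  fixes w e :: "nat \<Rightarrow> real"
  assumes "p \<le> q" "\<And>i. p \<le> i \<Longrightarrow> i < q \<Longrightarrow> w i \<le> w (Suc i)" "\<And>i. p \<le> i \<Longrightarrow> i \<le> q \<Longrightarrow> 0 \<le> w i"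
    and "\<And>t. p \<le> t \<Longrightarrow> t \<le> q \<Longrightarrow> 0 \<le> (\<Sum>i=t..q. e i)"
  shows "0 \<le> (\<Sum>i=p..q. w i * e i)"
proof -
  have "w t * (\<Sum>i=t..q. e i) \<le> (\<Sum>i=t..q. w i * e i)" if "t \<le> q" "p \<le> t" for t
    using that
  proof (induction t rule: inc_induct)
    case (step k)
    have "0 \<le> (w (Suc k) - w k) * (\<Sum>i=Suc k..q. e i)"
      using assms(2)[of k] assms(4)[of "Suc k"] step by (intro mult_nonneg_nonneg) auto
    then show ?case
      using step by (simp add: sum.atLeast_Suc_atMost algebra_simps)
  qed simp
  moreover have "0 \<le> w p * (\<Sum>i=p..q. e i)"
    using assms(3,4)[of p] assms(1) by simp
  ultimately show ?thesis
    using assms(1) by fastforce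
qed

text \<open>Abel summation of \<open>ln y - ln g\<close> against the decreasing weights \<open>y\<close>, then \<open>ln t \<le> t - 1\<close>.\<close>
lemma tomic_weyl:
  fixes y g :: "nat \<Rightarrow> real"
  assumes "p \<le> q" "\<And>i. p \<le> i \<Longrightarrow> i \<le> q \<Longrightarrow> 0 < y i" "\<And>i. p \<le> i \<Longrightarrow> i \<le> q \<Longrightarrow> 0 < g i"
    and "\<And>i. p \<le> i \<Longrightarrow> i < q \<Longrightarrow> y (Suc i) \<le> y i"
    and "\<And>t. p \<le> t \<Longrightarrow> t \<le> q \<Longrightarrow> (\<Prod>i=p..t. y i) \<le> (\<Prod>i=p..t. g i)"
  shows "(\<Sum>i=p..q. y i) \<le> (\<Sum>i=p..q. g i)"
proof -
  define d where "d i = ln (y i) - ln (g i)" for i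
  have "(\<Sum>i=p..q. y i * d i) \<le> 0"
  proof (rule sum_mult_nonpos_of_partial_sums[where w = y])
    show "p \<le> q"
      by (rule assms(1))
    show "y (Suc i) \<le> y i" if "p \<le> i" "i < q" for i
      using assms(4) that .
    show "0 \<le> y i" if "p \<le> i" "i \<le> q" for i
      using assms(2) that by fastforce
    fix t assume t: "p \<le> t" "t \<le> q"
    have "ln (\<Prod>i=p..t. y i) = (\<Sum>i=p..t. ln (y i))"
      by (rule ln_prod) (use t assms(2) in force)+
    moreover have "ln (\<Prod>i=p..t. g i) = (\<Sum>i=p..t. ln (g i))"
      by (rule ln_prod) (use t assms(3) in force)+
    ultimately
    have "(\<Sum>i=p..t. d i) = ln (\<Prod>i=p..t. y i) - ln (\<Prod>i=p..t. g i)"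
      by (simp add: d_def sum_subtractf)
    also have "\<dots> \<le> 0"
    proof -
      have "0 < (\<Prod>i=p..t. y i)"
        using t assms(2) by (intro prod_pos) auto
      then show ?thesis
        using assms(5)[OF t] by simp
    qed
    finally show "(\<Sum>i=p..t. d i) \<le> 0" .
  qed
  moreover have "y i - g i \<le> y i * d i" if "p \<le> i" "i \<le> q" for i
    using ln_diff_le[of "g i" "y i"] assms(2,3)[OF that] by (simp add: d_def field_simps)
  then have "(\<Sum>i=p..q. y i - g i) \<le> (\<Sum>i=p..q. y i * d i)"
    by (intro sum_mono) auto
  ultimately show ?thesis
    by (simp add: sum_subtractf)
qed

lemma Xset_block_sum_le:
  assumes y: "y \<in> Xset n" and km: "k < m" "m \<le> n"
    and Pk: "sylv_rem k \<le> (\<Prod>i=1..k. y i)"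
    and above: "\<And>t. k < t \<Longrightarrow> t \<le> m \<Longrightarrow> (\<Prod>i=1..t. y i) < sylv_rem t"
  shows "(\<Sum>i=Suc k..m. y i) \<le> (\<Sum>i=Suc k..m. 1 / real (sylv i))"
proof (rule tomic_weyl)
  have ypos: "0 < y i" if "1 \<le> i" "i \<le> n" for i
    using Xset_pos[OF y that] .
  show "Suc k \<le> m"
    using km by simp
  show "0 < y i" if "Suc k \<le> i" "i \<le> m" for i
    using ypos that km by simp
  show "0 < 1 / real (sylv i)" if "Suc k \<le> i" "i \<le> m" for i
    using sylv_ge_2[of i] that by simp
  show "y (Suc i) \<le> y i" if "Suc k \<le> i" "i < m" for i
    using Xset_Suc_le[OF y, of i] that km by simp
  fix t assume t: "Suc k \<le> t" "t \<le> m"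
  have Pk_pos: "0 < (\<Prod>i=1..k. y i)"
    using ypos km by (intro prod_pos) auto
  have split: "(\<Prod>i=1..t. y i) = (\<Prod>i=1..k. y i) * (\<Prod>i=Suc k..t. y i)"
    using prod.ub_add_nat[of 1 k y "t - k"] t by simp
  have "(\<Prod>i=Suc k..t. y i) = (\<Prod>i=1..t. y i) / (\<Prod>i=1..k. y i)"
    unfolding split by (rule nonzero_mult_div_cancel_left[symmetric]) (use Pk_pos in linarith)
  also have "\<dots> \<le> sylv_rem t / sylv_rem k"
    using above[of t] t Pk Pk_pos sylv_rem_pos[of t] sylv_rem_pos[of k] by (intro frac_le) auto
  also have "\<dots> = (\<Prod>i=Suc k..t. 1 / real (sylv i))"
    using prod_inverse_sylv[of k t] t by simp
  finally show "(\<Prod>i=Suc k..t. y i) \<le> (\<Prod>i=Suc k..t. 1 / real (sylv i))" .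
qed

text \<open>Let \<open>k \<le> m\<close> be the last index with \<open>\<Prod>i\<le>k. y i \<ge> sylv_rem k\<close>. The constraint at \<open>k\<close> bounds
  the tail after \<open>k\<close>, and \<open>Xset_block_sum_le\<close> the part between \<open>k\<close> and \<open>m\<close>.\<close>
lemma Xset_tail_sum_ge:
  assumes y: "y \<in> Xset n" and m: "m < n"
  shows "sylv_rem m \<le> (\<Sum>i=Suc m..n. y i)"
proof -
  define P where "P k = (\<Prod>i=1..k. y i)" for k
  obtain k where k: "k \<le> m" "k = 0 \<or> sylv_rem k \<le> P k"
    and above: "\<And>t. k < t \<Longrightarrow> t \<le> m \<Longrightarrow> \<not> (t = 0 \<or> sylv_rem t \<le> P t)"
    using obtain_last[of "\<lambda>k. k = 0 \<or> sylv_rem k \<le> P k" m] by blast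
  have tail_k: "sylv_rem k \<le> (\<Sum>i=Suc k..n. y i)"
  proof (cases "k = 0")
    case True
    then show ?thesis
      using Xset_sum[OF y] by simp
  next
    case False
    then show ?thesis
      using k Xset_prod_le_sum[OF y, of k] m unfolding P_def by simp
  qed
  show ?thesis
  proof (cases "k = m")
    case True
    then show ?thesis
      using tail_k by simp
  next
    case False
    have "(\<Sum>i=Suc k..m. y i) \<le> (\<Sum>i=Suc k..m. 1 / real (sylv i))"
    proof (rule Xset_block_sum_le[OF y])
      show "sylv_rem k \<le> (\<Prod>i=1..k. y i)"
        using k unfolding P_def by auto
      show "(\<Prod>i=1..t. y i) < sylv_rem t" if "k < t" "t \<le> m" for t
        using above[OF that] unfolding P_def by simp
    qed (use False k m in auto)
    moreover have "(\<Sum>i=Suc k..n. y i) = (\<Sum>i=Suc k..m. y i) + (\<Sum>i=Suc m..n. y i)"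
      using sum.ub_add_nat[of "Suc k" m y "n - m"] False k m by simp
    ultimately show ?thesis
      using tail_k sum_inverse_sylv[of k m] k by simp
  qed
qed

lemma Xset_coord_ge:
  assumes y: "y \<in> Xset n" and b: "1 \<le> b" "b \<le> n"
  shows "sylv_rem (b - 1) / real (n - b + 1) \<le> y b"
proof -
  have "sylv_rem (b - 1) \<le> (\<Sum>i=b..n. y i)"
    using Xset_tail_sum_ge[OF y, of "b - 1"] b by simp
  also have "\<dots> \<le> (\<Sum>i=b..n. y b)"
    using Xset_antimono[OF y, of b] b by (intro sum_mono) auto
  also have "\<dots> = real (n - b + 1) * y b"
    using b by simp
  finally show ?thesis
    using b by (simp add: divide_le_eq mult.commute)
qed

text \<open>The common value \<open>1 / ((n - l + 1) (sylv l - 1))\<close> of the last \<open>n - l + 1\<close> entries of \<open>xbar n l\<close>.\<close>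
definition xbar_level :: "nat \<Rightarrow> nat \<Rightarrow> real" where
  "xbar_level n l = sylv_rem (l - 1) / real (n - l + 1)"

lemma xbar_level_pos: "0 < xbar_level n l"
  using sylv_rem_pos by (simp add: xbar_level_def)

lemma xbar_level_le_sylv_rem: "xbar_level n l \<le> sylv_rem (l - 1)"
  using sylv_rem_pos[of "l - 1"] by (simp add: xbar_level_def divide_le_eq)

lemma xbar_level_le_1: "xbar_level n l \<le> 1"
  using xbar_level_le_sylv_rem sylv_rem_le_1 order_trans by blast

lemma xbar_below: "1 \<le> i \<Longrightarrow> i < l \<Longrightarrow> xbar n l i = 1 / real (sylv i)"
  by (simp add: xbar_def)

lemma xbar_at_level: "1 \<le> l \<Longrightarrow> l \<le> i \<Longrightarrow> i \<le> n \<Longrightarrow> xbar n l i = xbar_level n l"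
  using sylv_rem_pred[of l] by (simp add: xbar_def xbar_level_def)

lemma xbar_outside: "1 \<le> l \<Longrightarrow> l \<le> n \<Longrightarrow> i < 1 \<or> n < i \<Longrightarrow> xbar n l i = 0"
  by (auto simp: xbar_def)

lemma xbar_prod_below:
  "j \<le> k \<Longrightarrow> k < l \<Longrightarrow> (\<Prod>i=Suc j..k. xbar n l i) = sylv_rem k / sylv_rem j"
  using prod_inverse_sylv[of j k] by (simp add: xbar_below)

lemma xbar_prod_level:
  "1 \<le> l \<Longrightarrow> l \<le> p \<Longrightarrow> q \<le> n \<Longrightarrow> (\<Prod>i=p..q. xbar n l i) = xbar_level n l ^ (Suc q - p)"
  by (simp add: xbar_at_level)

lemma xbar_tail_sum:
  assumes l: "1 \<le> l" "l \<le> n" and j: "j < l"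
  shows "(\<Sum>i=Suc j..n. xbar n l i) = sylv_rem j"
proof -
  have "(\<Sum>i=Suc j..n. xbar n l i) = (\<Sum>i=Suc j..l-1. xbar n l i) + (\<Sum>i=l..n. xbar n l i)"
    using sum.ub_add_nat[of "Suc j" "l - 1" "xbar n l" "n - (l - 1)"] l j by simp
  also have "(\<Sum>i=Suc j..l-1. xbar n l i) = (\<Sum>i=Suc j..l-1. 1 / real (sylv i))"
    by (intro sum.cong) (auto simp: xbar_below)
  also have "\<dots> = sylv_rem j - sylv_rem (l - 1)"
    using sum_inverse_sylv[of j "l - 1"] j by simp
  also have "(\<Sum>i=l..n. xbar n l i) = sylv_rem (l - 1)"
    using l by (simp add: xbar_at_level xbar_level_def Suc_diff_le)
  finally show ?thesis
    by simp
qed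

lemma xbar_prod_le_tail_sum:
  assumes l: "1 \<le> l" "l \<le> n" and j: "1 \<le> j" "j < n"
  shows "(\<Prod>i=1..j. xbar n l i) \<le> (\<Sum>i=Suc j..n. xbar n l i)"
proof (cases "j < l")
  case True
  then show ?thesis
    using xbar_prod_below[of 0 j l n] xbar_tail_sum[OF l True] by simp
next
  case False
  have "(\<Prod>i=1..j. xbar n l i) = (\<Prod>i=1..l-1. xbar n l i) * (\<Prod>i=l..j. xbar n l i)"
    using prod.ub_add_nat[of 1 "l - 1" "xbar n l" "j - (l - 1)"] False l by simp
  also have "\<dots> = sylv_rem (l - 1) * xbar_level n l ^ (Suc j - l)"
    using xbar_prod_below[of 0 "l - 1" l n] xbar_prod_level[of l l j n] l j False by simp
  also have "\<dots> \<le> 1 * xbar_level n l"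
  proof (rule mult_mono)
    show "xbar_level n l ^ (Suc j - l) \<le> xbar_level n l"
      using xbar_level_pos[of n l] xbar_level_le_1[of n l] False
      by (simp add: power_decreasing[of 1 "Suc j - l" "xbar_level n l", simplified])
  qed (use sylv_rem_le_1 xbar_level_pos[of n l] in auto)
  also have "\<dots> \<le> real (n - j) * xbar_level n l"
    using j xbar_level_pos[of n l] by simp
  also have "\<dots> = (\<Sum>i=Suc j..n. xbar n l i)"
    using False l j by (simp add: xbar_at_level)
  finally show ?thesis .
qed

lemma xbar_in_Xset:
  assumes l: "1 \<le> l" "l \<le> n"
  shows "xbar n l \<in> Xset n"
proof (rule XsetI)
  let ?x = "xbar n l"
  show "?x i = 0" if "i < 1 \<or> n < i" for i
    using xbar_outside[OF l that] .
  show "(\<Sum>i=1..n. ?x i) = 1"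
    using xbar_tail_sum[OF l, of 0] l by simp
  show "?x 1 \<le> 1"
    using xbar_below[of 1 l n] xbar_at_level[of l 1 n] xbar_level_le_1[of n l] l sylv_1
    by (cases "1 < l") auto
  show "0 \<le> ?x n"
    using xbar_at_level[of l n n] xbar_level_pos[of n l] l by simp
  show "?x (Suc i) \<le> ?x i" if i: "1 \<le> i" "i < n" for i
  proof -
    consider "Suc i < l" | "Suc i = l" | "l \<le> i"
      by linarith
    then show ?thesis
    proof cases
      case 1
      then show ?thesis
        using sylv_mono[of i "Suc i"] sylv_ge_2[of i] i by (simp add: xbar_below frac_le)
    next
      case 2
      have "?x (Suc i) = xbar_level n l"
        using xbar_at_level[of l "Suc i" n] 2 i by simp
      also have "\<dots> \<le> sylv_rem i"
        using xbar_level_le_sylv_rem[of n l] by (simp add: 2[symmetric])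
      also have "\<dots> \<le> 1 / real (sylv i)"
        using sylv_rem_le_inverse_sylv i by simp
      finally show ?thesis
        using xbar_below[of i l n] 2 i by simp
    qed (use xbar_at_level[of l] l i in simp)
  qed
  show "(\<Prod>i=1..j. ?x i) \<le> (\<Sum>i=Suc j..n. ?x i)" if "1 \<le> j" "j < n" for j
    using xbar_prod_le_tail_sum[OF l that] .
qed

lemma sum_ratio_le_card_of_tail_sums_le:
  fixes y h :: "nat \<Rightarrow> real"
  assumes pq: "p \<le> q" and pos: "\<And>i. p \<le> i \<Longrightarrow> i \<le> q \<Longrightarrow> 0 < y i"
    and dec: "\<And>i. p \<le> i \<Longrightarrow> i < q \<Longrightarrow> y (Suc i) \<le> y i"
    and tails: "\<And>t. p \<le> t \<Longrightarrow> t \<le> q \<Longrightarrow> (\<Sum>i=t..q. h i) \<le> (\<Sum>i=t..q. y i)"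
  shows "(\<Sum>i=p..q. h i / y i) \<le> card {p..q}"
proof -
  have "0 \<le> (\<Sum>i=p..q. (1 / y i) * (y i - h i))"
  proof (rule sum_mult_nonneg_of_tail_sums[OF pq])
    show "1 / y i \<le> 1 / y (Suc i)" if "p \<le> i" "i < q" for i
      using dec[OF that] pos[of i] pos[of "Suc i"] that by (simp add: frac_le)
    show "0 \<le> 1 / y i" if "p \<le> i" "i \<le> q" for i
      using pos[OF that] by simp
    show "0 \<le> (\<Sum>i=t..q. y i - h i)" if "p \<le> t" "t \<le> q" for t
      using tails[OF that] by (simp add: sum_subtractf)
  qed
  also have "\<dots> = (\<Sum>i=p..q. 1 - h i / y i)"
  proof (intro sum.cong refl)
    fix i assume "i \<in> {p..q}"
    then have "0 < y i"
      using pos by simp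
    then show "1 / y i * (y i - h i) = 1 - h i / y i"
      by (simp add: field_simps)
  qed
  finally show ?thesis
    by (simp add: sum_subtractf)
qed

text \<open>Reverse form of Tomic--Weyl: \<open>ln t \<le> t - 1\<close> (with equality only at \<open>t = 1\<close>) turns the
  previous bound into \<open>\<Prod>h \<le> \<Prod>y\<close>, with equality only if \<open>y = h\<close>.\<close>
lemma tail_sums_le_imp_prod_le:
  fixes y h :: "nat \<Rightarrow> real"
  assumes pq: "p \<le> q"
    and pos: "\<And>i. p \<le> i \<Longrightarrow> i \<le> q \<Longrightarrow> 0 < y i" "\<And>i. p \<le> i \<Longrightarrow> i \<le> q \<Longrightarrow> 0 < h i"
    and dec: "\<And>i. p \<le> i \<Longrightarrow> i < q \<Longrightarrow> y (Suc i) \<le> y i"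
    and tails: "\<And>t. p \<le> t \<Longrightarrow> t \<le> q \<Longrightarrow> (\<Sum>i=t..q. h i) \<le> (\<Sum>i=t..q. y i)"
  shows "(\<Prod>i=p..q. h i) \<le> (\<Prod>i=p..q. y i)"
    and "(\<Prod>i=p..q. y i) = (\<Prod>i=p..q. h i) \<Longrightarrow> \<forall>i\<in>{p..q}. y i = h i"
proof -
  define r where "r i = (h i / y i - 1) - ln (h i / y i)" for i
  have r_nonneg: "0 \<le> r i" if "i \<in> {p..q}" for i
    using ln_le_minus_one[of "h i / y i"] pos[of i] that by (simp add: r_def)
  have "ln (\<Prod>i=p..q. y i) = (\<Sum>i=p..q. ln (y i))"
    by (rule ln_prod) (use pos in force)+
  moreover have "ln (\<Prod>i=p..q. h i) = (\<Sum>i=p..q. ln (h i))"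
    by (rule ln_prod) (use pos in force)+
  ultimately have "ln (\<Prod>i=p..q. y i) - ln (\<Prod>i=p..q. h i) = (\<Sum>i=p..q. ln (y i) - ln (h i))"
    by (simp add: sum_subtractf)
  also have "\<dots> = (\<Sum>i=p..q. r i + (1 - h i / y i))"
  proof (intro sum.cong refl)
    fix i assume "i \<in> {p..q}"
    then have "0 < y i" "0 < h i"
      using pos by auto
    then show "ln (y i) - ln (h i) = r i + (1 - h i / y i)"
      by (simp add: r_def ln_div)
  qed
  finally have gap: "(\<Sum>i=p..q. r i) \<le> ln (\<Prod>i=p..q. y i) - ln (\<Prod>i=p..q. h i)"
    using sum_ratio_le_card_of_tail_sums_le[OF pq pos(1) dec tails] by (simp add: sum.distrib sum_subtractf)
  have r_sum: "0 \<le> (\<Sum>i=p..q. r i)"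
    using r_nonneg by (intro sum_nonneg) auto
  have "ln (\<Prod>i=p..q. h i) \<le> ln (\<Prod>i=p..q. y i)"
    using gap r_sum by linarith
  moreover have "0 < (\<Prod>i=p..q. y i)" "0 < (\<Prod>i=p..q. h i)"
    using pos by (auto intro: prod_pos)
  ultimately show "(\<Prod>i=p..q. h i) \<le> (\<Prod>i=p..q. y i)"
    by simp
  assume "(\<Prod>i=p..q. y i) = (\<Prod>i=p..q. h i)"
  then have "(\<Sum>i=p..q. r i) = 0"
    using gap r_sum by simp
  show "\<forall>i\<in>{p..q}. y i = h i"
  proof
    fix i assume i: "i \<in> {p..q}"
    have "r i = 0"
      using sum_nonneg_eq_0_iff[of "{p..q}" r] r_nonneg \<open>(\<Sum>i=p..q. r i) = 0\<close> i by simp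
    then have "h i / y i = 1"
      using ln_eq_minus_one[of "h i / y i"] pos[of i] i by (simp add: r_def)
    then show "y i = h i"
      using pos(1)[of i] i by simp
  qed
qed

lemma xbar_last_prod:
  assumes "1 \<le> a" "a \<le> n"
  shows "(\<Prod>i=a..n. xbar n n i) = sylv_rem (n - 1) ^ 2 / sylv_rem (a - 1)"
proof -
  have "(\<Prod>i=a..n. xbar n n i) = (\<Prod>i=Suc (a-1)..n-1. xbar n n i) * xbar n n n"
    using prod.ub_add_nat[of a "n - 1" "xbar n n" 1] assms by simp
  also have "\<dots> = sylv_rem (n - 1) / sylv_rem (a - 1) * sylv_rem (n - 1)"
    using xbar_prod_below[of "a - 1" "n - 1" n n] xbar_at_level[of n n n] assms
    by (simp add: xbar_level_def)
  finally show ?thesis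
    by (simp add: power2_eq_square)
qed

text \<open>The tail sums of \<open>xbar n n\<close> are exactly the lower bounds of \<open>Xset_tail_sum_ge\<close>.\<close>
lemma xbar_last_prod_le:
  assumes y: "y \<in> Xset n" and a: "1 \<le> a" "a \<le> n"
  shows "(\<Prod>i=a..n. xbar n n i) \<le> (\<Prod>i=a..n. y i)"
    and "(\<Prod>i=a..n. y i) = (\<Prod>i=a..n. xbar n n i) \<Longrightarrow> \<forall>i\<in>{a..n}. y i = xbar n n i"
proof -
  have ypos: "0 < y i" if "a \<le> i" "i \<le> n" for i
    using Xset_pos[OF y] that a by simp
  have xpos: "0 < xbar n n i" if "a \<le> i" "i \<le> n" for i
    using xbar_below[of i n n] xbar_at_level[of n i n] sylv_ge_2[of i] xbar_level_pos[of n n] that a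
    by (cases "i < n") auto
  have dec: "y (Suc i) \<le> y i" if "a \<le> i" "i < n" for i
    using Xset_Suc_le[OF y] that a by simp
  have tails: "(\<Sum>i=t..n. xbar n n i) \<le> (\<Sum>i=t..n. y i)" if "a \<le> t" "t \<le> n" for t
    using xbar_tail_sum[of n n "t - 1"] Xset_tail_sum_ge[OF y, of "t - 1"] that a by simp
  show "(\<Prod>i=a..n. xbar n n i) \<le> (\<Prod>i=a..n. y i)"
    by (rule tail_sums_le_imp_prod_le(1)[OF _ ypos xpos dec tails]) (use a in simp_all)
  show "(\<Prod>i=a..n. y i) = (\<Prod>i=a..n. xbar n n i) \<Longrightarrow> \<forall>i\<in>{a..n}. y i = xbar n n i"
    by (rule tail_sums_le_imp_prod_le(2)[OF _ ypos xpos dec tails]) (use a in simp_all)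
qed

text \<open>\<open>tail_const (d + 1)\<close> is the constant of \<open>balanced_prod_ge\<close> for \<open>d + 1\<close> terms: the values up
  to \<open>d = 3\<close> are sharp enough for the small cases, beyond that a crude recursion suffices.
  The values at \<open>0\<close> and \<open>1\<close> are never used.\<close>
fun tail_const :: "nat \<Rightarrow> real" where
  "tail_const 0 = 1"
| "tail_const (Suc 0) = 1"
| "tail_const (Suc (Suc 0)) = 1/2"
| "tail_const (Suc (Suc (Suc 0))) = 1/9"
| "tail_const (Suc (Suc (Suc (Suc 0)))) = 1/72"
| "tail_const (Suc (Suc (Suc (Suc (Suc m))))) =
    tail_const (Suc (Suc (Suc (Suc m)))) / (real (m + 5) * 2 ^ (m + 3))"

lemma tail_const_pos: "0 < tail_const m"
  by (induction m rule: tail_const.induct) auto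

lemma tail_const_Suc:
  assumes "4 \<le> m"
  shows "tail_const (Suc m) = tail_const m / (real (Suc m) * 2 ^ (m - 1))"
proof -
  define k where "k = m - 4"
  have "m = Suc (Suc (Suc (Suc k)))"
    using assms by (simp add: k_def)
  then show ?thesis
    by (simp add: add.commute power_add)
qed

lemma tail_const_4: "tail_const 4 = 1/72"
  by (simp add: numeral_eq_Suc)

lemma tail_const_5: "tail_const 5 = 1/2880"
  by (simp add: numeral_eq_Suc)

lemma tail_const_mult_le:
  fixes u R :: real
  assumes d: "1 \<le> d" and u: "0 \<le> u" "u < R" and nu: "u + R \<le> real (Suc (Suc d)) * u"
  shows "tail_const (Suc (Suc d)) * (u + R) ^ Suc d \<le> u * (tail_const (Suc d) * R ^ d)"
proof -
  consider "d = 1" | "d = 2" | "3 \<le> d"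
    using d by linarith
  then show ?thesis
  proof cases
    case 1
    have "0 \<le> (2 * u - R) * (2 * R - u)"
      using nu u 1 by (intro mult_nonneg_nonneg) auto
    then show ?thesis
      using 1 by (simp add: numeral_2_eq_2 power2_eq_square algebra_simps)
  next
    case 2
    have "R * R \<le> (3 * u) * R"
      using nu u 2 by (intro mult_right_mono) auto
    moreover have "0 \<le> u * R + u * u"
      using u by simp
    ultimately have "0 \<le> 4 * u * R + u\<^sup>2 - R\<^sup>2"
      by (simp add: power2_eq_square algebra_simps)
    then have "0 \<le> (R - u) * (4 * u * R + u\<^sup>2 - R\<^sup>2)"
      using u by simp
    then show ?thesis
      using 2 by (simp add: numeral_3_eq_3 numeral_2_eq_2 power2_eq_square power3_eq_cube algebra_simps)
  next
    case 3
    text \<open>Crudely, \<open>u \<ge> (u + R) / (d + 2)\<close> and \<open>R \<ge> (u + R) / 2\<close>.\<close>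
    have "tail_const (Suc (Suc d)) * (u + R) ^ Suc d
        = ((u + R) / real (Suc (Suc d))) * (tail_const (Suc d) * ((u + R) / 2) ^ d)"
      using tail_const_Suc[of "Suc d"] 3 by (simp add: field_simps power_divide)
    also have "\<dots> \<le> u * (tail_const (Suc d) * R ^ d)"
      using nu u tail_const_pos[of "Suc d"]
      by (intro mult_mono mult_left_mono power_mono) (auto simp: divide_le_eq mult.commute)
    finally show ?thesis .
  qed
qed

lemma balanced_prod_ge:
  fixes z :: "nat \<Rightarrow> real"
  assumes "1 \<le> d"
    and dec: "\<And>i. p \<le> i \<Longrightarrow> i < p + d \<Longrightarrow> z (Suc i) \<le> z i"
    and nonneg: "\<And>i. p \<le> i \<Longrightarrow> i \<le> p + d \<Longrightarrow> 0 \<le> z i"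
    and bal: "\<And>j. p \<le> j \<Longrightarrow> j + 2 \<le> p + d \<Longrightarrow> z j < (\<Sum>i=Suc j..p+d. z i)"
  shows "tail_const (Suc d) * (\<Sum>i=p..p+d. z i) ^ d \<le> (\<Prod>i=p..<p+d. z i)"
  using assms
proof (induction d arbitrary: p rule: nat_induct_at_least)
  case base
  then show ?case
    using base(2)[of p] by (simp add: numeral_2_eq_2)
next
  case (Suc d)
  define R where "R = (\<Sum>i=Suc p..Suc p + d. z i)"
  have zmax: "z i \<le> z p" if "p \<le> i" "i \<le> p + Suc d" for i
    using that
  proof (induction i rule: dec_induct)
    case (step k)
    then show ?case
      using Suc.prems(1)[of k] by simp
  qed simp
  have sum_eq: "(\<Sum>i=p..p + Suc d. z i) = z p + R"
    unfolding R_def by (simp add: sum.atLeast_Suc_atMost)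
  have "(\<Sum>i=p..p + Suc d. z i) \<le> (\<Sum>i=p..p + Suc d. z p)"
    using zmax by (intro sum_mono) auto
  then have nu: "z p + R \<le> real (Suc (Suc d)) * z p"
    using sum_eq by simp
  have IH: "tail_const (Suc d) * R ^ d \<le> (\<Prod>i=Suc p..<Suc p + d. z i)"
    unfolding R_def by (rule Suc.IH) (use Suc.prems in auto)
  have zR: "z p < R"
    using Suc.prems(3)[of p] Suc.hyps unfolding R_def by simp
  have "tail_const (Suc (Suc d)) * (z p + R) ^ Suc d \<le> z p * (tail_const (Suc d) * R ^ d)"
    by (rule tail_const_mult_le[OF Suc.hyps _ zR nu]) (use Suc.prems(2)[of p] in simp)
  also have "\<dots> \<le> z p * (\<Prod>i=Suc p..<Suc p + d. z i)"
    using IH Suc.prems(2)[of p] by (intro mult_left_mono) auto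
  also have "\<dots> = (\<Prod>i=p..<p + Suc d. z i)"
    by (simp add: prod.atLeast_Suc_lessThan)
  finally show ?case
    using sum_eq by simp
qed

text \<open>If the tail after \<open>k\<close> does not exceed \<open>y k\<close>, collapsing it into a single coordinate gives a
  point of \<open>Xset (k + 1)\<close>, to which \<open>xbar_last_prod_le\<close> applies.\<close>
lemma Xset_collapse_prod_ge:
  assumes y: "y \<in> Xset n" and a: "1 \<le> a" "a \<le> Suc k" and k: "1 \<le> k" "k < n"
    and unbal: "(\<Sum>i=Suc k..n. y i) \<le> y k"
  shows "sylv_rem k ^ 2 / sylv_rem (a - 1) \<le> (\<Prod>i=a..k. y i) * (\<Sum>i=Suc k..n. y i)"
proof -
  define T where "T = (\<Sum>i=Suc k..n. y i)"
  define v where "v i = (if 1 \<le> i \<and> i \<le> k then y i else if i = Suc k then T else 0)" for i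
  have tail_v: "(\<Sum>i=Suc j..Suc k. v i) = (\<Sum>i=Suc j..n. y i)" if "j \<le> k" for j
  proof -
    have "(\<Sum>i=Suc j..Suc k. v i) = (\<Sum>i=Suc j..k. y i) + T"
      using that by (simp add: v_def)
    also have "\<dots> = (\<Sum>i=Suc j..n. y i)"
      unfolding T_def using sum.ub_add_nat[of "Suc j" k y "n - k"] that k by simp
    finally show ?thesis .
  qed
  have prod_v: "(\<Prod>i=p..k. v i) = (\<Prod>i=p..k. y i)" if "1 \<le> p" for p
    using that by (intro prod.cong) (auto simp: v_def)
  have "v \<in> Xset (Suc k)"
  proof (rule XsetI)
    show "(\<Sum>i=1..Suc k. v i) = 1"
      using tail_v[of 0] Xset_sum[OF y] by simp
    show "v 1 \<le> 1"
      using Xset_antimono[OF y, of 1 1] y k unfolding Xset_def by (simp add: v_def)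
    show "0 \<le> v (Suc k)"
      using Xset_tail_sum_ge[OF y k(2)] sylv_rem_pos[of k] by (simp add: v_def T_def)
    show "v (Suc i) \<le> v i" if "1 \<le> i" "i < Suc k" for i
      using Xset_Suc_le[OF y, of i] unbal that k by (cases "i = k") (auto simp: v_def T_def)
    show "(\<Prod>i=1..j. v i) \<le> (\<Sum>i=Suc j..Suc k. v i)" if "1 \<le> j" "j < Suc k" for j
    proof -
      have "(\<Prod>i=1..j. v i) = (\<Prod>i=1..j. y i)"
        using that by (intro prod.cong) (auto simp: v_def)
      then show ?thesis
        using Xset_prod_le_sum[OF y, of j] tail_v[of j] that k by simp
    qed
  qed (auto simp: v_def)
  then have "(\<Prod>i=a..Suc k. xbar (Suc k) (Suc k) i) \<le> (\<Prod>i=a..Suc k. v i)"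
    using xbar_last_prod_le(1) a by blast
  also have "(\<Prod>i=a..Suc k. v i) = (\<Prod>i=a..k. y i) * T"
    using prod_v[of a] a by (simp add: v_def)
  finally show ?thesis
    using xbar_last_prod[of a "Suc k"] a unfolding T_def by simp
qed

lemma sylv_rem_sq_le_tail_const_5: "sylv_rem (j + 3)^2 \<le> 2 * tail_const 5 * sylv_rem j ^ 5"
proof (cases "j = 0")
  case True
  then show ?thesis
    by (simp add: sylv_rem_3 tail_const_5 power2_eq_square)
next
  case False
  define a where "a = sylv_rem j"
  define B where "B = sylv_rem (j + 2)"
  have a: "0 < a"
    using sylv_rem_pos by (simp add: a_def)
  have B: "0 \<le> B" "B \<le> a / 6" "B \<le> 1/42"
    using sylv_rem_pos[of "j + 2"] sylv_rem_add_le[of j 2] decseqD[OF decseq_sylv_rem, of 3 "j + 2"] False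
    by (auto simp: B_def a_def sylv_rem_2 sylv_rem_3 less_imp_le)
  have B_sq: "B^2 \<le> a^4 / 36"
    using sylv_rem_Suc_Suc_le[of j] B(1) power_mono[of B "a^2/6" 2]
    by (simp add: B_def a_def power_divide flip: power_mult)
  have "sylv_rem (j + 3) \<le> B^2"
    using sylv_rem_Suc_le_sq[of "j + 2"] by (simp add: B_def numeral_3_eq_3)
  then have "sylv_rem (j + 3)^2 \<le> B^2 * (B * B)"
    using sylv_rem_pos[of "j + 3"] power_mono[of _ "B^2" 2] by (simp add: power2_eq_square)
  also have "\<dots> \<le> (a^4 / 36) * ((a / 6) * (1/42))"
    using B B_sq by (intro mult_mono) auto
  also have "\<dots> \<le> 2 * tail_const 5 * a ^ 5"
    using a by (simp add: tail_const_5 power_eq_if)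
  finally show ?thesis
    by (simp add: a_def)
qed

lemma sylv_prod_sq_ge:
  assumes "5 \<le> m"
  shows "(m + 1) * 2 ^ (m - 1) \<le> sylv_prod (m - 2) ^ 2"
  using assms
proof (induction m rule: dec_induct)
  case base
  have "sylv_prod 3 = 42"
    using sylv_rem_3 by (simp add: sylv_rem_def)
  then show ?case
    by simp
next
  case (step m)
  have "(Suc m + 1) * 2 ^ (Suc m - 1) = 2 * (m + 2) * 2 ^ (m - 1)"
    using step by (cases m) auto
  also have "\<dots> \<le> 4 * ((m + 1) * 2 ^ (m - 1))"
    by simp
  also have "\<dots> \<le> 4 * sylv_prod (m - 2) ^ 2"
    using step by simp
  also have "\<dots> = (2 * sylv_prod (m - 2)) ^ 2"
    by (simp add: power_mult_distrib)
  also have "\<dots> \<le> sylv_prod (Suc (m - 2)) ^ 2"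
    using sylv_prod_ge_1[of "m - 2"] by (intro power_mono) (auto simp: sylv_prod_Suc')
  also have "Suc (m - 2) = Suc m - 2"
    using step by simp
  finally show ?case .
qed

lemma sylv_rem_sq_le_inverse:
  assumes "5 \<le> m"
  shows "sylv_rem (m - 2)^2 \<le> 1 / (real (Suc m) * 2 ^ (m - 1))"
proof -
  have "real ((m + 1) * 2 ^ (m - 1)) \<le> real (sylv_prod (m - 2) ^ 2)"
    using sylv_prod_sq_ge[OF assms] of_nat_le_iff by blast
  then have "real (Suc m) * 2 ^ (m - 1) \<le> real (sylv_prod (m - 2))^2"
    by (simp add: algebra_simps)
  then show ?thesis
    unfolding sylv_rem_def by (simp add: power_divide frac_le)
qed

lemma sylv_rem_sq_le_tail_const_ge_5:
  assumes "5 \<le> m"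
  shows "sylv_rem (j + m - 2)^2 \<le> 2 * tail_const m * sylv_rem j ^ m"
  using assms
proof (induction m rule: dec_induct)
  case base
  then show ?case
    using sylv_rem_sq_le_tail_const_5[of j] by (simp add: add.commute)
next
  case (step m)
  define B where "B = sylv_rem (j + m - 2)"
  define a where "a = sylv_rem j"
  have a: "0 < a"
    using sylv_rem_pos by (simp add: a_def)
  have B: "0 < B" "B \<le> a * sylv_rem (m - 2)" "B \<le> sylv_rem (m - 2)"
    using sylv_rem_pos sylv_rem_add_le[of j "m - 2"] decseqD[OF decseq_sylv_rem, of "m - 2" "j + m - 2"] step
    by (auto simp: B_def a_def)
  have "j + Suc m - 2 = Suc (j + m - 2)"
    using step by simp
  then have "sylv_rem (j + Suc m - 2) \<le> B^2"
    using sylv_rem_Suc_le_sq by (simp add: B_def)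
  then have "sylv_rem (j + Suc m - 2)^2 \<le> B^2 * (B * B)"
    using sylv_rem_pos[of "j + Suc m - 2"] power_mono[of _ "B^2" 2] by (simp add: power2_eq_square)
  also have "\<dots> \<le> (2 * tail_const m * a ^ m) * (a * sylv_rem (m - 2) * sylv_rem (m - 2))"
    using step.IH B a tail_const_pos[of m] by (intro mult_mono) (auto simp: a_def B_def)
  also have "\<dots> = (2 * tail_const m * a ^ m) * a * sylv_rem (m - 2)^2"
    by (simp add: power2_eq_square algebra_simps)
  also have "\<dots> \<le> (2 * tail_const m * a ^ m) * a * (1 / (real (Suc m) * 2 ^ (m - 1)))"
    using sylv_rem_sq_le_inverse[OF step.hyps(1)] a tail_const_pos[of m] by (intro mult_left_mono) auto
  also have "\<dots> = 2 * tail_const (Suc m) * a ^ Suc m"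
    using tail_const_Suc[of m] step by simp
  finally show ?case
    by (simp add: a_def)
qed

lemma sylv_rem_sq_le_tail_const:
  assumes "2 \<le> m" "4 \<le> j + m"
  shows "sylv_rem (j + m - 2)^2 \<le> 2 * tail_const m * sylv_rem j ^ m"
proof -
  consider "m = 2" | "m = 3" | "m = 4" | "5 \<le> m"
    using assms(1) by linarith
  then show ?thesis
  proof cases
    case 1
    then show ?thesis
      by (simp add: numeral_2_eq_2)
  next
    case 2
    then show ?thesis
      using sylv_rem_Suc_sq_le_two_ninths[of j] assms(2) by (simp add: numeral_3_eq_3)
  next
    case 3
    have "sylv_rem (Suc (Suc j))^2 \<le> (sylv_rem j ^ 2 / 6)^2"
      using sylv_rem_Suc_Suc_le[of j] sylv_rem_pos less_imp_le by (blast intro: power_mono)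
    then show ?thesis
      using 3 by (simp add: tail_const_4 power_divide flip: power_mult)
  next
    case 4
    then show ?thesis
      by (rule sylv_rem_sq_le_tail_const_ge_5)
  qed
qed

lemma Xset_balanced_tail_prod_ge:
  assumes y: "y \<in> Xset n" and j: "j + 2 \<le> n"
    and bal: "\<And>i. j < i \<Longrightarrow> i + 2 \<le> n \<Longrightarrow> y i < (\<Sum>l=Suc i..n. y l)"
  shows "tail_const (n - j) * (\<Sum>i=Suc j..n. y i) ^ (n - j - 1) \<le> (\<Prod>i=Suc j..n-1. y i)"
proof -
  define d where "d = n - j - 1"
  have d: "1 \<le> d" "Suc j + d = n" "Suc d = n - j"
    using j by (auto simp: d_def)
  have "tail_const (Suc d) * (\<Sum>i=Suc j..Suc j + d. y i) ^ d \<le> (\<Prod>i=Suc j..<Suc j + d. y i)"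
  proof (rule balanced_prod_ge[OF d(1)])
    show "y (Suc i) \<le> y i" if "Suc j \<le> i" "i < Suc j + d" for i
      using Xset_Suc_le[OF y, of i] that d by simp
    show "0 \<le> y i" if "Suc j \<le> i" "i \<le> Suc j + d" for i
      using Xset_nonneg[OF y, of i] that d by simp
    show "y i < (\<Sum>l=Suc i..Suc j + d. y l)" if "Suc j \<le> i" "i + 2 \<le> Suc j + d" for i
      using bal[of i] that d by simp
  qed
  moreover have "{Suc j..<n} = {Suc j..n - 1}"
    using d by auto
  ultimately show ?thesis
    using d by (simp add: d_def)
qed

lemma mult_ge_of_head_tail_bounds:
  fixes \<alpha> c C P Q T :: real
  assumes "0 < \<alpha>" "\<alpha> \<le> T" "0 \<le> P" "0 < c" "0 \<le> C" "2 \<le> m"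
    and head: "\<alpha>^2 / c \<le> P * T" and tail: "C * T ^ (m - 1) \<le> Q"
  shows "C * \<alpha> ^ m / c \<le> P * Q"
proof -
  have "m = 2 + (m - 2)" "m - 1 = Suc (m - 2)"
    using assms by auto
  then have "C * \<alpha> ^ m / c = (\<alpha>^2 / c) * (C * \<alpha> ^ (m - 2))"
    by (metis (no_types, lifting) power_add mult.commute mult.left_commute times_divide_eq_left)
  also have "\<dots> \<le> (P * T) * (C * T ^ (m - 2))"
    using assms by (intro mult_mono mult_left_mono power_mono) auto
  also have "\<dots> = P * (C * T ^ (m - 1))"
    using \<open>m - 1 = Suc (m - 2)\<close> by simp
  also have "\<dots> \<le> P * Q"
    using tail assms by (intro mult_left_mono)
  finally show ?thesis .
qed

text \<open>Split \<open>y\<close> after the last index \<open>k \<le> n - 2\<close> at which \<open>y k\<close> dominates the rest of the tail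
  (or after \<open>a - 1\<close> if that is later). The head together with the remaining tail is bounded by
  collapsing, the balanced part by \<open>balanced_prod_ge\<close>.\<close>
lemma Xset_penult_prod_ge:
  assumes y: "y \<in> Xset n" and n: "4 \<le> n" and a: "1 \<le> a" "a < n"
  shows "sylv_rem (n - 2)^2 / (2 * sylv_rem (a - 1)) \<le> (\<Prod>i=a..n-1. y i)"
proof -
  define T where "T j = (\<Sum>i=Suc j..n. y i)" for j
  obtain k where k: "k \<le> n - 2" "k = 0 \<or> T k \<le> y k"
    and bal: "\<And>i. k < i \<Longrightarrow> i \<le> n - 2 \<Longrightarrow> \<not> (i = 0 \<or> T i \<le> y i)"
    using obtain_last[of "\<lambda>k. k = 0 \<or> T k \<le> y k" "n - 2"] by blast
  define j where "j = (if a \<le> k then k else a - 1)"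
  have j: "k \<le> j" "j \<le> n - 2" "a \<le> Suc j"
    using k a by (auto simp: j_def)
  have ypos: "0 < y i" if "1 \<le> i" "i \<le> n" for i
    using Xset_pos[OF y that] .
  have T_ge: "sylv_rem i \<le> T i" if "i < n" for i
    unfolding T_def using Xset_tail_sum_ge[OF y that] .
  have head: "sylv_rem j ^ 2 / sylv_rem (a - 1) \<le> (\<Prod>i=a..j. y i) * T j"
  proof (cases "a \<le> k")
    case True
    then show ?thesis
      unfolding j_def T_def using k a n
      by (intro Xset_collapse_prod_ge[OF y]) (auto simp: T_def)
  next
    case False
    then show ?thesis
      using T_ge[of "a - 1"] a sylv_rem_pos[of "a - 1"] by (simp add: j_def power2_eq_square)
  qed
  define m where "m = n - j"
  have m: "2 \<le> m" "j + m = n"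
    using j n by (auto simp: m_def)
  have tail: "tail_const m * T j ^ (m - 1) \<le> (\<Prod>i=Suc j..n-1. y i)"
    using Xset_balanced_tail_prod_ge[OF y, of j] bal j n unfolding T_def m_def by (force simp: not_le)
  have "j < n"
    using j n by simp
  have head_pos: "0 \<le> (\<Prod>i=a..j. y i)"
  proof (intro prod_nonneg)
    show "0 \<le> y i" if "i \<in> {a..j}" for i
      using less_imp_le[OF ypos[of i]] that a j n by auto
  qed
  have "sylv_rem (n - 2)^2 / 2 \<le> tail_const m * sylv_rem j ^ m"
    using sylv_rem_sq_le_tail_const[of m j] m n by simp
  then have "sylv_rem (n - 2)^2 / 2 / sylv_rem (a - 1) \<le> tail_const m * sylv_rem j ^ m / sylv_rem (a - 1)"
    using sylv_rem_pos[of "a - 1"] by (intro divide_right_mono) simp_all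
  also have "\<dots> \<le> (\<Prod>i=a..j. y i) * (\<Prod>i=Suc j..n-1. y i)"
    using head tail head_pos T_ge[of j] \<open>j < n\<close> sylv_rem_pos tail_const_pos m(1)
    by (intro mult_ge_of_head_tail_bounds) (auto simp: less_imp_le)
  also have "\<dots> = (\<Prod>i=a..n-1. y i)"
    using prod.ub_add_nat[of a j y "n - 1 - j"] j n by simp
  finally show ?thesis
    by simp
qed

lemma obj_xbar_split:
  assumes "1 \<le> a" "a \<le> l" "l \<le> Suc b" "b \<le> n"
  shows "obj a b (xbar n l) = sylv_rem (l - 1) / sylv_rem (a - 1) * xbar_level n l ^ (Suc b - l)"
proof -
  have "obj a b (xbar n l) = (\<Prod>i=Suc (a - 1)..l - 1. xbar n l i) * (\<Prod>i=l..b. xbar n l i)"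
    unfolding obj_def using prod.ub_add_nat[of a "l - 1" "xbar n l" "Suc b - l"] assms by simp
  also have "(\<Prod>i=Suc (a - 1)..l - 1. xbar n l i) = sylv_rem (l - 1) / sylv_rem (a - 1)"
    using xbar_prod_below[of "a - 1" "l - 1" l n] assms by simp
  also have "(\<Prod>i=l..b. xbar n l i) = xbar_level n l ^ (Suc b - l)"
    using xbar_prod_level[of l l b n] assms by simp
  finally show ?thesis .
qed

lemma obj_xbar_level:
  "1 \<le> l \<Longrightarrow> l \<le> a \<Longrightarrow> b \<le> n \<Longrightarrow> obj a b (xbar n l) = xbar_level n l ^ (Suc b - a)"
  unfolding obj_def by (rule xbar_prod_level)

lemma obj_xbar_below:
  "1 \<le> a \<Longrightarrow> a \<le> b \<Longrightarrow> b < l \<Longrightarrow> obj a b (xbar n l) = sylv_rem b / sylv_rem (a - 1)"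
  unfolding obj_def using xbar_prod_below[of "a - 1" b l n] by simp

lemma xbar_level_Suc_less:
  assumes "Suc (Suc j) \<le> n" "3 \<le> n"
  shows "xbar_level n (Suc (Suc j)) < xbar_level n (Suc j)"
proof -
  define N where "N = real (n - j)"
  define s where "s = real (sylv (Suc j))"
  have N: "2 \<le> N"
    using assms by (simp add: N_def)
  have "N < s * (N - 1)"
  proof (cases j)
    case 0
    then show ?thesis
      using assms sylv_1 by (simp add: N_def s_def)
  next
    case (Suc i)
    then have "3 \<le> s"
      using sylv_mono[of 2 "Suc j"] sylv_2 by (simp add: s_def)
    then have "3 * (N - 1) \<le> s * (N - 1)"
      using N by (intro mult_right_mono) auto
    then show ?thesis
      using N by simp
  qed
  moreover have "xbar_level n (Suc (Suc j)) = sylv_rem j / (s * (N - 1))"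
    "xbar_level n (Suc j) = sylv_rem j / N"
    using assms by (auto simp: xbar_level_def sylv_rem_Suc_div N_def s_def Suc_diff_Suc of_nat_diff)
  ultimately show ?thesis
    using sylv_rem_pos[of j] N by (auto intro: divide_strict_left_mono)
qed

lemma xbar_level_strict_antimono:
  assumes "1 \<le> l" "l < l'" "l' \<le> n" "3 \<le> n"
  shows "xbar_level n l' < xbar_level n l"
proof -
  have "Suc l \<le> l'" "l' \<le> n"
    using assms by auto
  then show ?thesis
  proof (induction l' rule: dec_induct)
    case base
    then show ?case
      using xbar_level_Suc_less[of "l - 1" n] assms by simp
  next
    case (step k)
    then show ?case
      using xbar_level_Suc_less[of "k - 1" n] assms by simp
  qed
qed

lemma obj_xbar_less_of_less:
  assumes "4 \<le> n" "1 \<le> l" "l < a" "a \<le> b" "b \<le> n"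
  shows "obj a b (xbar n a) < obj a b (xbar n l)"
proof -
  have "obj a b (xbar n a) = xbar_level n a ^ (Suc b - a)"
    using obj_xbar_level[of a a b n] assms by simp
  also have "\<dots> < xbar_level n l ^ (Suc b - a)"
    using xbar_level_strict_antimono[of l a n] xbar_level_pos[of n a] assms
    by (intro power_strict_mono) auto
  also have "\<dots> = obj a b (xbar n l)"
    using obj_xbar_level[of l a b n] assms by simp
  finally show ?thesis .
qed

lemma power_add_one_div_le_exp_1:
  fixes D :: real
  assumes "0 < D" "real r \<le> D"
  shows "((D + 1) / D) ^ r \<le> exp 1"
proof -
  have "((D + 1) / D) ^ r = (1 + 1 / D) ^ r"
    using assms by (simp add: field_simps)
  also have "\<dots> \<le> exp (1 / D) ^ r"
    using assms by (intro power_mono exp_ge_add_one_self) auto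
  also have "\<dots> = exp (real r / D)"
    by (simp flip: exp_of_nat_mult)
  also have "\<dots> \<le> exp 1"
    using assms by simp
  finally show ?thesis .
qed

lemma pow_Suc_mult_less_of_exp_bound:
  fixes s D :: real
  assumes s: "2 \<le> s" "exp 1 * (D + 1) < s" and D: "0 < D" and r: "1 \<le> r" "real r \<le> D"
  shows "(s - 1) * (D + 1) ^ Suc r < s ^ Suc r * D ^ r"
proof -
  have "(D + 1) ^ r = ((D + 1) / D) ^ r * D ^ r"
    using D by (simp add: power_divide)
  also have "\<dots> \<le> exp 1 * D ^ r"
    using power_add_one_div_le_exp_1[OF D r(2)] D by (intro mult_right_mono) auto
  finally have "(D + 1) ^ Suc r \<le> (exp 1 * (D + 1)) * D ^ r"
    using D by (simp add: mult_left_mono mult.left_commute)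
  also have "\<dots> < s * D ^ r"
    using s D by (intro mult_strict_right_mono) auto
  finally have "(s - 1) * (D + 1) ^ Suc r < (s - 1) * (s * D ^ r)"
    using s by (intro mult_strict_left_mono) auto
  also have "\<dots> \<le> s ^ r * (s * D ^ r)"
    using s D power_increasing[of 1 r s] r by (intro mult_right_mono) auto
  finally show ?thesis
    by (simp add: ac_simps)
qed

text \<open>This confines the index \<open>l\<close> of a minimizing \<open>xbar n l\<close> to doubly logarithmic size.\<close>
lemma obj_xbar_Suc_less:
  assumes a: "1 \<le> a" "a \<le> l" and b: "l < b" "b \<le> n"
    and s: "exp 1 * real n < real (sylv l)"
  shows "obj a b (xbar n (Suc l)) < obj a b (xbar n l)"
proof -
  define \<alpha> where "\<alpha> = sylv_rem (l - 1)"
  define s where "s = real (sylv l)"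
  define D where "D = real (n - l)"
  define r where "r = b - l"
  have l: "1 \<le> l"
    using a by simp
  have \<alpha>: "0 < \<alpha>" "\<alpha> = 1 / (s - 1)"
    using sylv_rem_pos sylv_rem_pred[OF l] sylv_ge_2[OF l] by (simp_all add: \<alpha>_def s_def)
  have s2: "2 \<le> s"
    using sylv_ge_2[OF l] by (simp add: s_def)
  have D: "0 < D" "D + 1 \<le> real n"
    using b l by (auto simp: D_def)
  have r: "1 \<le> r" "real r \<le> D"
    using b by (auto simp: r_def D_def)
  have "exp 1 * (D + 1) \<le> exp 1 * real n"
    using D(2) by (intro mult_left_mono) auto
  then have "exp 1 * (D + 1) < s"
    using s unfolding s_def by linarith
  then have key: "(s - 1) * (D + 1) ^ Suc r < s ^ Suc r * D ^ r"
    using pow_Suc_mult_less_of_exp_bound s2 D r by blast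
  have "sylv_rem l = \<alpha> / s"
    using sylv_rem_Suc_div[of "l - 1"] l by (simp add: \<alpha>_def s_def)
  then have "obj a b (xbar n (Suc l)) = \<alpha> / s / sylv_rem (a - 1) * (\<alpha> / s / D) ^ r"
    using obj_xbar_split[of a "Suc l" b n] a b
    by (simp add: xbar_level_def r_def D_def Suc_diff_Suc)
  also have "\<dots> = \<alpha> ^ Suc r / sylv_rem (a - 1) / (s ^ Suc r * D ^ r)"
    by (simp add: power_divide field_simps)
  also have "\<dots> < \<alpha> ^ Suc r / sylv_rem (a - 1) / ((s - 1) * (D + 1) ^ Suc r)"
    using key \<alpha> s2 D sylv_rem_pos[of "a - 1"] by (intro divide_strict_left_mono) auto
  also have "\<dots> = \<alpha> / sylv_rem (a - 1) * (\<alpha> / (D + 1)) ^ Suc r"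
    using \<alpha> by (simp add: power_divide power_mult_distrib)
  also have "\<dots> = obj a b (xbar n l)"
    using obj_xbar_split[of a l b n] a b
    by (simp add: xbar_level_def \<alpha>_def r_def D_def Suc_diff_le ac_simps)
  finally show ?thesis .
qed

lemma sylv_gt_double_exp: "2 \<le> l \<Longrightarrow> 2 ^ 2 ^ (l - 2) < sylv l"
proof (induction l rule: dec_induct)
  case (step l)
  define X :: nat where "X = 2 ^ 2 ^ (l - 2)"
  have "X * X \<le> (sylv l - 1) * sylv l"
    using step by (intro mult_mono) (auto simp: X_def)
  also have "\<dots> < sylv (Suc l)"
    using sylv_Suc[of l] sylv_prod_Suc[of "l - 1"] sylv_Suc[of "l - 1"] step by simp
  moreover have "2 ^ 2 ^ (Suc l - 2) = X * X"
  proof -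
    have "Suc l - 2 = Suc (l - 2)"
      using step by simp
    then show ?thesis
      by (simp add: X_def mult_2 power_add)
  qed
  ultimately show ?case
    by simp
qed (simp add: sylv_2)

lemma exp_mult_less_sylv:
  assumes n: "4 \<le> n" and l: "2 + log 2 (log 2 (real n) + log 2 (exp 1)) < real l"
  shows "exp 1 * real n < real (sylv l)"
proof -
  define L where "L = log 2 (exp 1 * real n)"
  have L_eq: "L = log 2 (real n) + log 2 (exp 1)"
    using n by (simp add: L_def log_mult_pos)
  have "1 * 4 < exp 1 * real n"
    using n by (intro mult_less_le_imp_less) auto
  then have "2 < L"
    unfolding L_def using less_log_iff[of 2 "exp 1 * real n" 2] by (simp add: powr_numeral)
  then have "1 < log 2 L"
    using less_log_iff[of 2 L 1] by simp
  then have l3: "3 < real l"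
    using l unfolding L_eq[symmetric] by linarith
  then have "log 2 L < real (l - 2)"
    using l L_eq by (simp add: of_nat_diff)
  then have "L < real (2 ^ (l - 2))"
    using log_less_iff[of 2 L] \<open>2 < L\<close> by (simp add: powr_realpow)
  then have "exp 1 * real n < 2 powr real (2 ^ (l - 2))"
    using powr_less_mono[of L "real (2 ^ (l - 2))" 2] n unfolding L_def by simp
  also have "\<dots> = real (2 ^ 2 ^ (l - 2))"
    using powr_realpow[of 2 "2 ^ (l - 2)"] by simp
  also have "\<dots> < real (sylv l)"
    using sylv_gt_double_exp[of l] l3 by simp
  finally show ?thesis .
qed

lemma tail_const_mult_pow_lt:
  assumes "4 \<le> m"
  shows "tail_const m * real m ^ (m - 1) < 1"
  using assms
proof (induction m rule: dec_induct)
  case base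
  then show ?case
    by (simp add: tail_const_4)
next
  case (step m)
  have "tail_const (Suc m) * real (Suc m) ^ (Suc m - 1) = tail_const m * (real (Suc m) ^ m / (real (Suc m) * 2 ^ (m - 1)))"
    using tail_const_Suc[of m] step by simp
  also have "real (Suc m) ^ m / (real (Suc m) * 2 ^ (m - 1)) = real (Suc m) ^ (m - 1) / 2 ^ (m - 1)"
  proof -
    have "real (Suc m) ^ m = real (Suc m) * real (Suc m) ^ (m - 1)"
      using step power_Suc[of "real (Suc m)" "m - 1"] by simp
    then show ?thesis
      by simp
  qed
  also have "\<dots> = (real (Suc m) / 2) ^ (m - 1)"
    by (simp add: power_divide)
  also have "\<dots> \<le> real m ^ (m - 1)"
    using step by (intro power_mono) auto
  finally have "tail_const (Suc m) * real (Suc m) ^ (Suc m - 1) \<le> tail_const m * real m ^ (m - 1)"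
    using tail_const_pos[of m] by (simp add: mult_left_mono)
  then show ?case
    using step by simp
qed

lemma tail_const_sq_mult_pow_lt:
  assumes "4 \<le> m"
  shows "4 * tail_const m ^ 2 * real m ^ m < 1"
proof -
  have mm: "real m ^ m = real m * real m ^ (m - 1)"
    using assms power_Suc[of "real m" "m - 1"] by simp
  have "4 * tail_const m ^ 2 * real m ^ m = (tail_const m * real m ^ (m - 1))^2 * (4 * real m / real m ^ (m - 1))"
  proof -
    have "real m ^ (m - 1) > 0"
      using assms by simp
    then show ?thesis
      unfolding mm by (simp add: power2_eq_square field_simps)
  qed
  also have "\<dots> < 1 * 1"
  proof (rule mult_strict_mono')
    show "(tail_const m * real m ^ (m - 1))^2 < 1"
      using tail_const_mult_pow_lt[OF assms] tail_const_pos[of m] assms by (simp add: power_less_one_iff abs_square_less_1)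
    have "real m ^ (m - 1) \<ge> real m ^ 3"
      using assms by (intro power_increasing) auto
    moreover have "real m * real m \<ge> 4 * 4"
      using assms by (intro mult_mono) auto
    then have "real m ^ 3 \<ge> real m * 16"
      using assms by (simp add: power3_eq_cube mult_left_mono[of 16 "real m * real m" "real m", simplified] algebra_simps)
    ultimately have "real m ^ (m - 1) \<ge> real m * 16"
      by linarith
    then show "4 * real m / real m ^ (m - 1) < 1"
      using assms by (simp add: divide_less_eq)
  qed (use assms in auto)
  finally show ?thesis
    by simp
qed

lemma sylv_rem_sq_lt_last_ge_4:
  assumes "4 \<le> m"
  shows "sylv_rem (j + m - 1)^2 < sylv_rem j ^ (m + 1) / real m ^ m"
proof -
  define a where "a = sylv_rem j"
  have a0: "a > 0"
    using sylv_rem_pos by (simp add: a_def)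
  have e: "j + m - 1 = Suc (j + m - 2)"
    using assms by simp
  have p: "sylv_rem (j + m - 2)^2 \<le> 2 * tail_const m * a ^ m"
    using sylv_rem_sq_le_tail_const[of m j] assms by (simp add: a_def)
  have "sylv_rem (j + m - 1) \<le> sylv_rem (j + m - 2)^2"
    unfolding e by (rule sylv_rem_Suc_le_sq)
  then have "sylv_rem (j + m - 1)^2 \<le> (2 * tail_const m * a ^ m)^2"
    using p sylv_rem_pos[of "j + m - 1"] by (meson less_imp_le order_trans power_mono)
  also have "\<dots> = 4 * tail_const m ^ 2 * a ^ m * a ^ m"
    by (simp add: power2_eq_square)
  also have "\<dots> \<le> 4 * tail_const m ^ 2 * a ^ m * a"
  proof -
    have "a ^ m \<le> a ^ 1"
      using a0 sylv_rem_le_1[of j] assms unfolding a_def by (intro power_decreasing) auto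
    then show ?thesis
      using a0 tail_const_pos[of m] by (intro mult_left_mono) auto
  qed
  also have "\<dots> = (4 * tail_const m ^ 2 * real m ^ m) * (a ^ (m+1) / real m ^ m)"
    using assms by (simp add: field_simps)
  also have "\<dots> < 1 * (a ^ (m+1) / real m ^ m)"
    using tail_const_sq_mult_pow_lt[OF assms] a0 assms by (intro mult_strict_right_mono) auto
  finally show ?thesis
    by (simp add: a_def)
qed

lemma sylv_rem_sq_lt_last:
  assumes "2 \<le> m" "4 \<le> j + m"
  shows "sylv_rem (j + m - 1)^2 < sylv_rem j ^ (m + 1) / real m ^ m"
proof -
  consider "m = 2" | "m = 3" | "4 \<le> m"
    using assms(1) by linarith
  then show ?thesis
  proof cases
    case 1
    then show ?thesis
      using sylv_rem_Suc_sq_lt_quarter[of j] assms by (simp add: numeral_2_eq_2 power3_eq_cube)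
  next
    case 2
    have "sylv_rem (Suc (Suc j))^2 \<le> (sylv_rem j ^ 2 / 6)^2"
      using sylv_rem_Suc_Suc_le[of j] sylv_rem_pos less_imp_le by (blast intro: power_mono)
    also have "\<dots> < sylv_rem j ^ 4 / 27"
      using sylv_rem_pos[of j] by (simp add: power_divide flip: power_mult)
    finally show ?thesis
      using 2 by (simp add: numeral_3_eq_3 power4_eq_xxxx)
  qed (rule sylv_rem_sq_lt_last_ge_4)
qed

lemma sylv_rem_sq_lt_penult_ge_4:
  assumes "4 \<le> m"
  shows "sylv_rem (j + m - 2)^2 < 2 * sylv_rem j ^ m / real m ^ (m - 1)"
proof -
  have "sylv_rem (j + m - 2)^2 \<le> 2 * tail_const m * sylv_rem j ^ m"
    using sylv_rem_sq_le_tail_const[of m j] assms by simp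
  also have "\<dots> < 2 * sylv_rem j ^ m / real m ^ (m - 1)"
  proof -
    have mp: "real m ^ (m - 1) > 0"
      using assms by simp
    have "tail_const m < 1 / real m ^ (m - 1)"
      using tail_const_mult_pow_lt[OF assms] mp by (simp add: less_divide_eq)
    moreover have "2 * sylv_rem j ^ m > 0"
      using sylv_rem_pos[of j] by simp
    ultimately have "(2 * sylv_rem j ^ m) * tail_const m < (2 * sylv_rem j ^ m) * (1 / real m ^ (m - 1))"
      by (intro mult_strict_left_mono) auto
    then show ?thesis
      by (simp add: algebra_simps)
  qed
  finally show ?thesis .
qed

lemma sylv_rem_sq_lt_penult:
  assumes "3 \<le> m" "m = 3 \<Longrightarrow> 2 \<le> j"
  shows "sylv_rem (j + m - 2)^2 < 2 * sylv_rem j ^ m / real m ^ (m - 1)"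
proof (cases "m = 3")
  case True
  then show ?thesis
    using sylv_rem_Suc_sq_lt_two_ninths[of j] assms by (simp add: numeral_3_eq_3)
next
  case False
  then show ?thesis
    using sylv_rem_sq_lt_penult_ge_4[of m j] assms by simp
qed

lemma obj_xbar_less_of_greater:
  assumes "1 \<le> a" "a \<le> b" "b < n - 1" "b < l" "l \<le> n"
  shows "obj a b (xbar n b) < obj a b (xbar n l)"
proof -
  define \<alpha> where "\<alpha> = sylv_rem (b - 1)"
  have \<alpha>: "0 < \<alpha>" "\<alpha> \<le> 1"
    using sylv_rem_pos sylv_rem_le_1 by (auto simp: \<alpha>_def)
  have "\<alpha> * xbar_level n b = \<alpha>^2 / real (n - b + 1)"
    by (simp add: xbar_level_def \<alpha>_def power2_eq_square)
  also have "\<dots> < \<alpha>^2 / (1 + \<alpha>)"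
    using assms \<alpha> by (intro divide_strict_left_mono) auto
  also have "\<dots> = sylv_rem b"
    using sylv_rem_Suc[of "b - 1"] assms by (simp add: \<alpha>_def)
  finally have "\<alpha> * xbar_level n b / sylv_rem (a - 1) < sylv_rem b / sylv_rem (a - 1)"
    using sylv_rem_pos by (intro divide_strict_right_mono)
  then show ?thesis
    using obj_xbar_split[of a b b n] obj_xbar_below[of a b l n] assms by (simp add: \<alpha>_def)
qed

lemma obj_xbar_last_less:
  assumes n: "4 \<le> n" and a: "1 \<le> a" "a \<le> n" and l: "1 \<le> l" "l < n"
  shows "obj a n (xbar n n) < obj a n (xbar n l)"
proof (cases "l < a")
  case True
  have "obj a n (xbar n n) \<le> obj a n (xbar n a)"
    unfolding obj_def using xbar_last_prod_le(1)[OF xbar_in_Xset[of a n]] a by simp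
  also have "\<dots> < obj a n (xbar n l)"
    using obj_xbar_less_of_less[of n l a n] True n a l by simp
  finally show ?thesis .
next
  case False
  define j where "j = l - 1"
  define m where "m = Suc n - l"
  have m: "2 \<le> m" "j + m - 1 = n - 1" "4 \<le> j + m"
    using l n by (auto simp: j_def m_def)
  have "obj a n (xbar n l) = sylv_rem j / sylv_rem (a - 1) * (sylv_rem j / real m) ^ m"
    using obj_xbar_split[of a l n n] False l a
    by (simp add: xbar_level_def j_def m_def Suc_diff_le)
  also have "\<dots> = (sylv_rem j ^ (m + 1) / real m ^ m) / sylv_rem (a - 1)"
    by (simp add: power_divide)
  finally have obj_l: "obj a n (xbar n l) = (sylv_rem j ^ (m + 1) / real m ^ m) / sylv_rem (a - 1)" .
  have "obj a n (xbar n n) = sylv_rem (n - 1)^2 / sylv_rem (a - 1)"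
    unfolding obj_def using xbar_last_prod a by simp
  also have "\<dots> < (sylv_rem j ^ (m + 1) / real m ^ m) / sylv_rem (a - 1)"
    using sylv_rem_sq_lt_last[OF m(1,3)] m(2) sylv_rem_pos[of "a - 1"]
    by (intro divide_strict_right_mono) simp_all
  finally show ?thesis
    unfolding obj_l .
qed

lemma obj_xbar_penult:
  assumes "4 \<le> n" "1 \<le> a" "a < n"
  shows "obj a (n - 1) (xbar n (n - 1)) = sylv_rem (n - 2)^2 / (2 * sylv_rem (a - 1))"
  using obj_xbar_split[of a "n - 1" "n - 1" n] assms
  by (simp add: xbar_level_def power2_eq_square numeral_2_eq_2)

text \<open>For \<open>n = 4\<close> and \<open>a \<le> 2\<close> the point \<open>xbar 4 2 = (1/2, 1/6, 1/6, 1/6)\<close> attains the same value.\<close>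
lemma obj_xbar_4_2:
  assumes "a \<in> {1, 2}"
  shows "obj a 3 (xbar 4 2) = sylv_rem 2 ^ 2 / (2 * sylv_rem (a - 1))"
  using obj_xbar_split[of a 2 3 4] assms
  by (auto simp: xbar_level_def sylv_rem_Suc sylv_rem_2 power2_eq_square)

lemma obj_xbar_penult_less:
  assumes n: "4 \<le> n" and a: "1 \<le> a" "a < n" and l: "1 \<le> l" "l \<le> n"
    and not_min: "\<not> (l = n - 1 \<or> (n = 4 \<and> a \<in> {1, 2} \<and> l = 2))"
  shows "sylv_rem (n - 2)^2 / (2 * sylv_rem (a - 1)) < obj a (n - 1) (xbar n l)"
proof -
  consider "l < a" | "l = n" | "a \<le> l" "l \<le> n - 2"
    using not_min l by linarith
  then show ?thesis
  proof cases
    case 1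
    have "sylv_rem (n - 2)^2 / (2 * sylv_rem (a - 1)) \<le> obj a (n - 1) (xbar n a)"
      unfolding obj_def using Xset_penult_prod_ge[OF xbar_in_Xset[of a n]] n a by simp
    also have "\<dots> < obj a (n - 1) (xbar n l)"
      using obj_xbar_less_of_less[of n l a "n - 1"] 1 n a l by simp
    finally show ?thesis .
  next
    case 2
    define \<alpha> where "\<alpha> = sylv_rem (n - 2)"
    have \<alpha>: "0 < \<alpha>" "\<alpha> \<le> 1/2"
      using sylv_rem_pos sylv_rem_le_half[of "n - 2"] n by (auto simp: \<alpha>_def)
    have "\<alpha>^2 / 2 < \<alpha>^2 / (1 + \<alpha>)"
      using \<alpha> by (intro divide_strict_left_mono) auto
    also have "\<dots> = sylv_rem (n - 1)"
      using sylv_rem_Suc[of "n - 2"] n by (simp add: \<alpha>_def Suc_diff_Suc numeral_2_eq_2)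
    finally have "\<alpha>^2 / 2 / sylv_rem (a - 1) < sylv_rem (n - 1) / sylv_rem (a - 1)"
      using sylv_rem_pos by (intro divide_strict_right_mono)
    then show ?thesis
      using obj_xbar_below[of a "n - 1" l n] 2 a by (simp add: \<alpha>_def)
  next
    case 3
    define j where "j = l - 1"
    define m where "m = Suc n - l"
    have m: "3 \<le> m" "j + m - 2 = n - 2"
      using 3 n l by (auto simp: j_def m_def)
    have "m = 3 \<Longrightarrow> 2 \<le> j"
      using not_min 3 a n l by (auto simp: j_def m_def)
    then have "sylv_rem (n - 2)^2 / (2 * sylv_rem (a - 1)) < (2 * sylv_rem j ^ m / real m ^ (m - 1)) / (2 * sylv_rem (a - 1))"
      using sylv_rem_sq_lt_penult[of m j] m sylv_rem_pos[of "a - 1"] by (intro divide_strict_right_mono) auto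
    also have "\<dots> = sylv_rem j / sylv_rem (a - 1) * (sylv_rem j / real m) ^ (m - 1)"
      using m by (simp add: power_divide field_simps power_Suc[symmetric] del: power_Suc)
    also have "\<dots> = obj a (n - 1) (xbar n l)"
      using obj_xbar_split[of a l "n - 1" n] 3 l a n
      by (simp add: xbar_level_def j_def m_def Suc_diff_le)
    finally show ?thesis .
  qed
qed

lemma is_minimizer_xbar_single:
  assumes "1 \<le> b" "b \<le> n"
  shows "is_minimizer n b b (xbar n b)"
  unfolding is_minimizer_def
proof (intro conjI ballI)
  show "xbar n b \<in> Xset n"
    using xbar_in_Xset assms .
  fix y assume "y \<in> Xset n"
  then show "obj b b (xbar n b) \<le> obj b b y"
    using Xset_coord_ge[of y n b] xbar_at_level[of b b n] assms
    by (simp add: obj_def xbar_level_def)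
qed

lemma is_minimizer_xbar_location:
  assumes n: "4 \<le> n" and a: "1 \<le> a" "a \<le> b" and b: "b < n - 1"
    and l: "1 \<le> l" "l \<le> n" and min: "is_minimizer n a b (xbar n l)"
  shows "(a \<le> l \<and> real l \<le> 2 + log 2 (log 2 (real n) + log 2 (exp 1))) \<or> l = b"
proof (rule ccontr)
  assume contra: "\<not> ?thesis"
  have "a \<le> n" "b \<le> n"
    using a b by auto
  have le: "obj a b (xbar n l) \<le> obj a b (xbar n l')" if "1 \<le> l'" "l' \<le> n" for l'
    using min xbar_in_Xset[OF that] unfolding is_minimizer_def by blast
  consider "l < a" | "b < l" | "a \<le> l" "l < b"
    using contra by linarith
  then show False
  proof cases
    case 1
    then show False
      using le[of a] obj_xbar_less_of_less[of n l a b] \<open>a \<le> n\<close> \<open>b \<le> n\<close> n a l by simp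
  next
    case 2
    then show False
      using le[of b] obj_xbar_less_of_greater[of a b n l] a b l by simp
  next
    case 3
    then have "exp 1 * real n < real (sylv l)"
      using contra exp_mult_less_sylv[OF n] by auto
    then show False
      using le[of "Suc l"] obj_xbar_Suc_less[of a l b n] \<open>b \<le> n\<close> 3 a l by simp
  qed
qed

lemma is_minimizer_xbar_last:
  assumes "1 \<le> a" "a \<le> n"
  shows "is_minimizer n a n (xbar n n)"
  unfolding is_minimizer_def obj_def
  using xbar_in_Xset[of n n] xbar_last_prod_le(1) assms by auto

lemma is_minimizer_full_unique:
  assumes "is_minimizer n 1 n y"
  shows "y = xbar n n"
proof
  fix i
  have y: "y \<in> Xset n"
    using assms unfolding is_minimizer_def by simp
  then have n: "1 \<le> n"
    using Xset_sum[of y n] by (cases n) auto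
  have "(\<Prod>i=1..n. y i) \<le> (\<Prod>i=1..n. xbar n n i)"
    using assms xbar_in_Xset[of n n] n unfolding is_minimizer_def obj_def by simp
  then have "\<forall>i\<in>{1..n}. y i = xbar n n i"
    using xbar_last_prod_le[OF y order_refl n] by simp
  then show "y i = xbar n n i"
    using Xset_zero[OF y, of i] xbar_outside[of n n i] n by (cases "i \<in> {1..n}") auto
qed

lemma is_minimizer_xbar_last_iff:
  assumes n: "4 \<le> n" and a: "1 \<le> a" "a \<le> n" and l: "1 \<le> l" "l \<le> n"
  shows "is_minimizer n a n (xbar n l) \<longleftrightarrow> l = n"
proof
  assume "is_minimizer n a n (xbar n l)"
  then have "obj a n (xbar n l) \<le> obj a n (xbar n n)"
    using xbar_in_Xset[of n n] n unfolding is_minimizer_def by simp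
  then show "l = n"
    using obj_xbar_last_less[OF n a, of l] l by (cases "l = n") auto
qed (use is_minimizer_xbar_last a in simp)

lemma is_minimizer_xbar_penult_iff:
  assumes n: "4 \<le> n" and a: "1 \<le> a" "a \<le> n - 1" and l: "1 \<le> l" "l \<le> n"
  shows "is_minimizer n a (n - 1) (xbar n l) \<longleftrightarrow> l = n - 1 \<or> (n = 4 \<and> a \<in> {1, 2} \<and> l = 2)"
proof -
  define V where "V = sylv_rem (n - 2)^2 / (2 * sylv_rem (a - 1))"
  have lower: "V \<le> obj a (n - 1) y" if "y \<in> Xset n" for y
    unfolding V_def obj_def using Xset_penult_prod_ge[OF that n] a n by simp
  show ?thesis
  proof
    assume "is_minimizer n a (n - 1) (xbar n l)"
    then have "obj a (n - 1) (xbar n l) \<le> V"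
      using xbar_in_Xset[of "n - 1" n] obj_xbar_penult[OF n, of a] a n
      unfolding is_minimizer_def V_def by force
    then show "l = n - 1 \<or> (n = 4 \<and> a \<in> {1, 2} \<and> l = 2)"
      using obj_xbar_penult_less[OF n, of a l] a l unfolding V_def by force
  next
    assume "l = n - 1 \<or> (n = 4 \<and> a \<in> {1, 2} \<and> l = 2)"
    then have "obj a (n - 1) (xbar n l) = V"
      using obj_xbar_penult[OF n, of a] obj_xbar_4_2[of a] a n unfolding V_def by auto
    then show "is_minimizer n a (n - 1) (xbar n l)"
      unfolding is_minimizer_def using xbar_in_Xset[OF l] lower by simp
  qed
qed

theorem mainTheorem13:
  fixes n a b l :: nat
  assumes "n \<ge> 4" and "1 \<le> a" and "a \<le> b" and "b \<le> n"
    and "1 \<le> l" and "l \<le> n"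
  shows "(a = b \<longrightarrow> is_minimizer n a b (xbar n b))
    \<and> (b < n - 1 \<and> is_minimizer n a b (xbar n l) \<longrightarrow>
         (a \<le> l \<and> real l \<le> 2 + log 2 (log 2 (real n) + log 2 (exp 1))) \<or> l = b)
    \<and> (a = 1 \<and> b = n \<longrightarrow>
         xbar n n = (\<lambda>i. if 1 \<le> i \<and> i < n then 1 / real (sylv i)
                         else if i = n then 1 / (real (sylv n) - 1) else 0)
         \<and> is_minimizer n a b (xbar n n)
         \<and> (\<forall>y. is_minimizer n a b y \<longrightarrow> y = xbar n n))
    \<and> (b = n \<longrightarrow> (is_minimizer n a b (xbar n l) \<longleftrightarrow> l = n))
    \<and> (b = n - 1 \<longrightarrow> (is_minimizer n a b (xbar n l) \<longleftrightarrow>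
         l = n - 1 \<or> (n = 4 \<and> a \<in> {1, 2} \<and> l = 2)))"
proof (intro conjI impI)
  show "is_minimizer n a b (xbar n b)" if "a = b"
    using is_minimizer_xbar_single assms that by simp
  show "(a \<le> l \<and> real l \<le> 2 + log 2 (log 2 (real n) + log 2 (exp 1))) \<or> l = b"
    if "b < n - 1 \<and> is_minimizer n a b (xbar n l)"
    using is_minimizer_xbar_location assms that by blast
  show "xbar n n = (\<lambda>i. if 1 \<le> i \<and> i < n then 1 / real (sylv i)
                     else if i = n then 1 / (real (sylv n) - 1) else 0)"
    by (auto simp: xbar_def)
  show "is_minimizer n a b (xbar n n)" if "a = 1 \<and> b = n"
    using is_minimizer_xbar_last assms that by simp
  show "\<forall>y. is_minimizer n a b y \<longrightarrow> y = xbar n n" if "a = 1 \<and> b = n"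
    using is_minimizer_full_unique that by blast
  show "is_minimizer n a b (xbar n l) \<longleftrightarrow> l = n" if "b = n"
    using is_minimizer_xbar_last_iff assms that by simp
  show "is_minimizer n a b (xbar n l) \<longleftrightarrow> l = n - 1 \<or> (n = 4 \<and> a \<in> {1, 2} \<and> l = 2)" if "b = n - 1"
    using is_minimizer_xbar_penult_iff assms that by simp
qed

end
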